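(* Let $N\subset\Gamma$ be a sublattice of signature $(1,r)$ whose orthogonal complement $N^\perp\subset\Gamma$ contains a hyperbolic plane $U'$. Then $N^\perp=N^\vee\oplus U'$ for a sublattice $N^\vee$ of signature $(1,18-r)$. Put $\Gamma'=U'^\perp$, so that $\Gamma=\Gamma'\oplus U'$ and $\Gamma'_{\mathbb R}=V\oplus V^\vee$ with $V=N_{\mathbb R}$ and $V^\vee=N^\vee_{\mathbb R}$. For a subspace $W\subset\Gamma_{\mathbb R}$ set $$\overline{\mathcal T}(W):=\{((P,\omega),B)\in \mathrm{Gr}^{\rm po}_{2,1}(\Gamma_{\mathbb R})\times\Gamma_{\mathbb R}: \omega,B\in W,\ P\subset W^\perp\}.$$ Then the mirror map $\tilde\xi$ associated with the splitting $\Gamma=\Gamma'\oplus U'$ maps $\gamma(\overline{\mathcal T}(V))$ bijectively onto $\gamma(\overline{\mathcal T}(V^\vee))$. That is, it induces a bijection $\overline{\mathcal T}(V)\cong\overline{\mathcal T}(V^\vee)$.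
   Context: $\Gamma=2(-E_8)\oplus3U$ is the K3 lattice (even, unimodular, signature $(3,19)$). $U$ is the hyperbolic plane with standard basis $(w,w^* )$ ($w^2={w^*}^2=0$, $\langle w,w^*\rangle=1$). An isometry $U'\cong U$ is fixed, and $(v,v^* )$ is the basis of $U'$ corresponding to $(w,w^* )$. $\mathrm{Gr}^{\rm po}_{2,1}(\Gamma_{\mathbb R})=\{(P,\omega): P$ an oriented positive definite plane in $\Gamma_{\mathbb R}$, $\omega\in P^\perp$, $\omega^2>0\}$. The map $\gamma$ sends $((P,\omega),B)$ to the pair $(H_1,H_2)$ of orthogonal oriented positive planes in $\Gamma_{\mathbb R}\oplus U_{\mathbb R}$ given by: - $H_1=\{x-\langle x,B\rangle w: x\in P\}$, oriented via $P$; - $H_2$ with ordered basis $\big(\tfrac12(\omega^2-B^2)w+w^*+B,\ \omega-\langle\omega,B\rangle w\big)$. $\xi\in \mathrm O(\Gamma\oplus U)$ is the identity on $\Gamma'$ and swaps $v\leftrightarrow w$, $v^*\leftrightarrow w^*$. $\iota(H_1,H_2)=(H_2,H_1)$, and $\tilde\xi=\iota\circ\xi$ acts on pairs of planes (isometries acting componentwise with transported orientations). *)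

theory Defs
  imports "HOL-Analysis.Analysis"
begin

text \<open>Edges of the E8 Dynkin diagram (Bourbaki labelling, 0-indexed).\<close>
definition e8edge :: "nat \<Rightarrow> nat \<Rightarrow> bool" where
  "e8edge i j \<longleftrightarrow> (i, j) \<in> {(0,2),(1,3),(2,3),(3,4),(4,5),(5,6),(6,7)}"

definition mE8 :: "nat \<Rightarrow> nat \<Rightarrow> int" where
  "mE8 i j = (if i = j then -2 else if e8edge i j \<or> e8edge j i then 1 else 0)"

text \<open>Gram matrix of the K3 lattice 2(-E8) + 3U on indices 0..21.\<close>
definition K3gram :: "nat \<Rightarrow> nat \<Rightarrow> int" where
  "K3gram i j =
    (if i < 8 \<and> j < 8 then mE8 i j
     else if 8 \<le> i \<and> i < 16 \<and> 8 \<le> j \<and> j < 16 then mE8 (i - 8) (j - 8)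
     else if 16 \<le> i \<and> i < 22 \<and> 16 \<le> j \<and> j < 22 \<and> i \<noteq> j
             \<and> (i - 16) div 2 = (j - 16) div 2 then 1
     else 0)"

definition bf :: "real^'n^'n \<Rightarrow> real^'n \<Rightarrow> real^'n \<Rightarrow> real" where
  "bf Q x y = x \<bullet> (Q *v y)"

definition latt :: "(real^'n) set" where
  "latt = {x. \<forall>i. x $ i \<in> \<int>}"

definition sublattice :: "(real^'n) set \<Rightarrow> bool" where
  "sublattice N \<longleftrightarrow> N \<subseteq> latt \<and> 0 \<in> N \<and> (\<forall>x\<in>N. \<forall>y\<in>N. x + y \<in> N \<and> x - y \<in> N)"

definition posdef_sub :: "real^'n^'n \<Rightarrow> (real^'n) set \<Rightarrow> bool" where
  "posdef_sub Q S \<longleftrightarrow> subspace S \<and> (\<forall>x\<in>S. x \<noteq> 0 \<longrightarrow> bf Q x x > 0)"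

definition negdef_sub :: "real^'n^'n \<Rightarrow> (real^'n) set \<Rightarrow> bool" where
  "negdef_sub Q S \<longleftrightarrow> subspace S \<and> (\<forall>x\<in>S. x \<noteq> 0 \<longrightarrow> bf Q x x < 0)"

text \<open>A real subspace W has (nondegenerate) signature (p,q): dim W = p+q and W contains
  a positive definite subspace of dim p and a negative definite subspace of dim q
  (by Sylvester's law this is equivalent to the usual definition).\<close>
definition has_signature :: "real^'n^'n \<Rightarrow> (real^'n) set \<Rightarrow> nat \<Rightarrow> nat \<Rightarrow> bool" where
  "has_signature Q W p q \<longleftrightarrow> subspace W \<and> dim W = p + q \<and>
     (\<exists>S \<subseteq> W. posdef_sub Q S \<and> dim S = p) \<and> (\<exists>S \<subseteq> W. negdef_sub Q S \<and> dim S = q)"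

definition lattice_signature :: "real^'n^'n \<Rightarrow> (real^'n) set \<Rightarrow> nat \<Rightarrow> nat \<Rightarrow> bool" where
  "lattice_signature Q N p q \<longleftrightarrow> has_signature Q (span N) p q"

definition orth_latt :: "real^'n^'n \<Rightarrow> (real^'n) set \<Rightarrow> (real^'n) set" where
  "orth_latt Q N = {x \<in> latt. \<forall>y\<in>N. bf Q x y = 0}"

definition orth_real :: "real^'n^'n \<Rightarrow> (real^'n) set \<Rightarrow> (real^'n) set" where
  "orth_real Q W = {x. \<forall>y\<in>W. bf Q x y = 0}"

text \<open>The oriented plane with oriented basis (x,y), as the set of all positively
  oriented ordered bases of span{x,y}.\<close>
definition oclass :: "'v::real_vector \<Rightarrow> 'v \<Rightarrow> ('v \<times> 'v) set" where
  "oclass x y = {(a *\<^sub>R x + b *\<^sub>R y, c *\<^sub>R x + d *\<^sub>R y) | a b c d. a * d - b * c > 0}"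

definition plane_span :: "('v::real_vector \<times> 'v) set \<Rightarrow> 'v set" where
  "plane_span P = span (fst ` P)"

definition pmap :: "('v \<Rightarrow> 'w) \<Rightarrow> ('v \<times> 'v) set \<Rightarrow> ('w \<times> 'w) set" where
  "pmap f P = (\<lambda>(p, q). (f p, f q)) ` P"

definition grpo :: "real^'n^'n \<Rightarrow> ((((real^'n) \<times> (real^'n)) set) \<times> (real^'n)) set" where
  "grpo Q = {(P, \<omega>). \<exists>x y. P = oclass x y \<and>
      (\<forall>a b. a *\<^sub>R x + b *\<^sub>R y = 0 \<longrightarrow> a = 0 \<and> b = 0) \<and>
      (\<forall>z\<in>span {x, y}. z \<noteq> 0 \<longrightarrow> bf Q z z > 0) \<and>
      (\<forall>z\<in>span {x, y}. bf Q z \<omega> = 0) \<and> bf Q \<omega> \<omega> > 0}"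

text \<open>An element (x, a, b) of real^'n \<times> real \<times> real stands for x + a w + b w*.\<close>
type_synonym 'n ext = "(real^'n) \<times> real \<times> real"

definition gammaH1 :: "real^'n^'n \<Rightarrow> real^'n \<Rightarrow> real^'n \<Rightarrow> 'n ext" where
  "gammaH1 Q B x = (x, - bf Q x B, 0)"

definition gamma_map :: "real^'n^'n \<Rightarrow> ((((real^'n) \<times> (real^'n)) set \<times> (real^'n)) \<times> (real^'n))
     \<Rightarrow> ('n ext \<times> 'n ext) set \<times> ('n ext \<times> 'n ext) set" where
  "gamma_map Q = (\<lambda>((P, \<omega>), B).
     (pmap (gammaH1 Q B) P,
      oclass (B, (bf Q \<omega> \<omega> - bf Q B B) / 2, 1) (\<omega>, - bf Q \<omega> B, 0)))"

text \<open>xi: identity on \<Gamma>' = U'^perp, swaps v <-> w and v* <-> w*.\<close>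
definition xi :: "real^'n^'n \<Rightarrow> real^'n \<Rightarrow> real^'n \<Rightarrow> 'n ext \<Rightarrow> 'n ext" where
  "xi Q v vs = (\<lambda>(x, a, b).
     (x - bf Q x vs *\<^sub>R v - bf Q x v *\<^sub>R vs + a *\<^sub>R v + b *\<^sub>R vs, bf Q x vs, bf Q x v))"

definition xi_tilde :: "real^'n^'n \<Rightarrow> real^'n \<Rightarrow> real^'n \<Rightarrow>
     ('n ext \<times> 'n ext) set \<times> ('n ext \<times> 'n ext) set \<Rightarrow>
     ('n ext \<times> 'n ext) set \<times> ('n ext \<times> 'n ext) set" where
  "xi_tilde Q v vs = (\<lambda>(H1, H2). (pmap (xi Q v vs) H2, pmap (xi Q v vs) H1))"

definition Tbar :: "real^'n^'n \<Rightarrow> (real^'n) set \<Rightarrow>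
     ((((real^'n) \<times> (real^'n)) set \<times> (real^'n)) \<times> (real^'n)) set" where
  "Tbar Q W = {((P, \<omega>), B). (P, \<omega>) \<in> grpo Q \<and> \<omega> \<in> W \<and> B \<in> W \<and> plane_span P \<subseteq> orth_real Q W}"

end

(* Rational subspaces are spanned by lattice points, so the real span V\<^sup>\<vee> of N\<^sup>\<vee> = N\<^sup>\<bottom> \<inter> U'\<^sup>\<bottom> is
   (V \<oplus> U')\<^sup>\<bottom>, of dimension 19 - r because the K3 form is nondegenerate.  As V is
   nondegenerate, \<Gamma>'\<^sub>\<real> = V \<oplus> V\<^sup>\<vee>, and comparing the positive and negative subspaces of V, V\<^sup>\<vee> and U'
   with the signature (3, 19) of \<Gamma> shows that V\<^sup>\<vee> has signature (1, 18 - r).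

   Since \<xi>~ is an involution it suffices to show that it maps \<gamma>(T(V)) into \<gamma>(T(V\<^sup>\<vee>)).  The map \<xi> is an
   isometry of \<Gamma> \<oplus> U exchanging U' and U.  It sends the conformal basis of the second plane of \<gamma>
   into \<Gamma>', where it spans a positive plane orthogonal to V\<^sup>\<vee>; and it sends the first plane, which
   lies in V\<^sup>\<bottom>, to a positive plane whose \<Gamma>-part lies in V\<^sup>\<vee>.  As V\<^sup>\<vee> has only one positive
   direction, the w\<^sup>*-coordinate cannot vanish on the latter plane, and a conformal basis adapted to it
   exhibits it as the second plane of \<gamma> for some \<omega>', B' \<in> V\<^sup>\<vee>. *)

theory Submission
  imports Defs
begin

section \<open>Symmetric bilinear forms and signatures\<close>

lemma bf_add_left: "bf Q (x + y) z = bf Q x z + bf Q y z"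
  by (simp add: bf_def inner_add_left)
lemma bf_add_right: "bf Q z (x + y) = bf Q z x + bf Q z y"
  by (simp add: bf_def inner_add_right matrix_vector_right_distrib)
lemma bf_diff_left: "bf Q (x - y) z = bf Q x z - bf Q y z"
  by (simp add: bf_def inner_diff_left)
lemma bf_diff_right: "bf Q z (x - y) = bf Q z x - bf Q z y"
  by (simp add: bf_def inner_diff_right matrix_vector_mult_diff_distrib)
lemma bf_scaleR_left: "bf Q (c *\<^sub>R x) z = c * bf Q x z"
  by (simp add: bf_def)
lemma bf_scaleR_right: "bf Q z (c *\<^sub>R x) = c * bf Q z x"
  by (simp add: bf_def matrix_vector_mult_scaleR)
lemma bf_zero_left: "bf Q 0 z = 0"
  by (simp add: bf_def)
lemma bf_zero_right: "bf Q z 0 = 0"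
  by (simp add: bf_def)
lemma bf_minus_left: "bf Q (- x) z = - bf Q x z"
  by (simp add: bf_def)
lemma bf_minus_right: "bf Q z (- x) = - bf Q z x"
  using bf_scaleR_right[of Q z "-1" x] by simp

lemmas bf_simps = bf_add_left bf_add_right bf_diff_left bf_diff_right bf_scaleR_left
  bf_scaleR_right bf_zero_left bf_zero_right bf_minus_left bf_minus_right

lemma bf_uminus_form: "bf (- Q) x y = - bf Q x y"
  by (simp add: bf_def matrix_vector_mult_def inner_vec_def sum_negf vec_eq_iff)

lemma negdef_sub_iff_posdef_sub_uminus: "negdef_sub Q S \<longleftrightarrow> posdef_sub (- Q) S"
  unfolding negdef_sub_def posdef_sub_def bf_uminus_form by auto

lemma subspace_bf_kernel: "subspace {y. bf Q x y = 0}"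
  unfolding subspace_def by (simp add: bf_simps)

lemma subspace_orth_real: "subspace (orth_real Q W)"
  unfolding subspace_def orth_real_def by (simp add: bf_simps)

lemma span_pair_iff: "z \<in> span {a, b} \<longleftrightarrow> (\<exists>s t. z = s *\<^sub>R a + t *\<^sub>R b)"
proof
  assume "z \<in> span {a, b}"
  then obtain s where "z - s *\<^sub>R a \<in> range (\<lambda>k. k *\<^sub>R b)"
    unfolding span_breakdown_eq span_singleton by blast
  then obtain t where "z - s *\<^sub>R a = t *\<^sub>R b" by auto
  then show "\<exists>s t. z = s *\<^sub>R a + t *\<^sub>R b" by (metis add.commute diff_eq_eq)
next
  assume "\<exists>s t. z = s *\<^sub>R a + t *\<^sub>R b"
  then obtain s t where "z = s *\<^sub>R a + t *\<^sub>R b" by blast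
  then show "z \<in> span {a, b}" by (simp add: span_add span_base span_scale)
qed

lemma dim_span_pair:
  assumes "\<And>a b. a *\<^sub>R x + b *\<^sub>R y = 0 \<Longrightarrow> a = 0 \<and> b = 0"
  shows "dim (span {x, y}) = 2"
proof -
  have "x \<noteq> y" "x \<noteq> 0" using assms[of 1 "-1"] assms[of 1 0] by auto
  moreover have "y \<notin> span {x}"
  proof
    assume "y \<in> span {x}"
    then obtain k where "y = k *\<^sub>R x" by (auto simp: span_singleton)
    then show False using assms[of "- k" 1] by simp
  qed
  ultimately have "independent {y, x}" by (simp add: independent_insert)
  then show ?thesis
    using dim_eq_card_independent \<open>x \<noteq> y\<close> by (fastforce simp: insert_commute)
qed

lemma subspace_Int_nonzero:
  fixes A B W :: "'a::euclidean_space set"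
  assumes "subspace A" "subspace B" "subspace W" "A \<subseteq> W" "B \<subseteq> W" "dim W < dim A + dim B"
  shows "\<exists>z. z \<in> A \<and> z \<in> B \<and> z \<noteq> 0"
proof (rule ccontr)
  assume "\<not> ?thesis"
  then have "dim (A \<inter> B) = 0" by auto
  have "{x + y |x y. x \<in> A \<and> y \<in> B} \<subseteq> W"
    using assms subspace_add by blast
  then have "dim {x + y |x y. x \<in> A \<and> y \<in> B} \<le> dim W" by (rule dim_subset)
  with dim_sums_Int[OF assms(1,2)] \<open>dim (A \<inter> B) = 0\<close> assms(6) show False by linarith
qed

lemma posdef_negdef_dim_le:
  assumes "posdef_sub Q S" "negdef_sub Q T" "subspace W" "S \<subseteq> W" "T \<subseteq> W"
  shows "dim S + dim T \<le> dim W"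
proof (rule ccontr)
  have ST: "subspace S" "subspace T" using assms(1,2) unfolding posdef_sub_def negdef_sub_def by auto
  assume "\<not> ?thesis"
  then obtain z where "z \<in> S" "z \<in> T" "z \<noteq> 0"
    using subspace_Int_nonzero[OF ST assms(3-5)] by auto
  then have "bf Q z z > 0" "bf Q z z < 0"
    using assms(1,2) unfolding posdef_sub_def negdef_sub_def by auto
  then show False by simp
qed

lemma posdef_dim_le_signature:
  assumes "has_signature Q W p q" "posdef_sub Q S" "S \<subseteq> W"
  shows "dim S \<le> p"
proof -
  obtain T where "negdef_sub Q T" "T \<subseteq> W" "dim T = q" "subspace W" "dim W = p + q"
    using assms(1) unfolding has_signature_def by blast
  then show ?thesis using posdef_negdef_dim_le[of Q S T W] assms(2,3) by simp
qed

lemma posdef_span_singleton: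
  assumes "bf Q x x > 0"
  shows "posdef_sub Q (span {x})" "dim (span {x}) = 1"
proof -
  have "bf Q z z > 0" if z: "z \<in> span {x}" "z \<noteq> 0" for z
  proof -
    obtain k where "z = k *\<^sub>R x" using z(1) by (auto simp: span_singleton)
    moreover from this have "k \<noteq> 0" using z(2) by auto
    ultimately show ?thesis
      using assms by (auto simp: bf_simps mult.assoc[symmetric] zero_less_mult_iff)
  qed
  then show "posdef_sub Q (span {x})" unfolding posdef_sub_def by simp
  show "dim (span {x}) = 1"
    using assms by (auto simp: bf_simps)
qed

lemma negdef_span_singleton:
  assumes "bf Q x x < 0"
  shows "negdef_sub Q (span {x})" "dim (span {x}) = 1"
  using posdef_span_singleton[of "- Q" x] assms
  unfolding negdef_sub_iff_posdef_sub_uminus bf_uminus_form by auto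

lemma posdef_span_pair:
  assumes "\<And>a b. a \<noteq> 0 \<or> b \<noteq> 0 \<Longrightarrow> bf Q (a *\<^sub>R x + b *\<^sub>R y) (a *\<^sub>R x + b *\<^sub>R y) > 0"
  shows "posdef_sub Q (span {x, y})" "dim (span {x, y}) = 2"
proof -
  have "bf Q z z > 0" if z: "z \<in> span {x, y}" "z \<noteq> 0" for z
  proof -
    obtain a b where "z = a *\<^sub>R x + b *\<^sub>R y" using z(1) span_pair_iff by blast
    then show ?thesis using assms[of a b] z(2) by (cases "a = 0 \<and> b = 0") auto
  qed
  then show "posdef_sub Q (span {x, y})"
    unfolding posdef_sub_def by simp
  have "a = 0 \<and> b = 0" if "a *\<^sub>R x + b *\<^sub>R y = 0" for a b
    using assms[of a b] that by (metis bf_zero_left less_irrefl)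
  then show "dim (span {x, y}) = 2" by (rule dim_span_pair)
qed

definition form_radical :: "real^'n^'n \<Rightarrow> (real^'n) set \<Rightarrow> (real^'n) set" where
  "form_radical Q W = {x \<in> W. \<forall>y\<in>W. bf Q x y = 0}"

locale symmetric_form =
  fixes Q :: "real^'n^'n"
  assumes bf_commute: "bf Q x y = bf Q y x"
begin

lemma posdef_orthogonal_sum:
  assumes "posdef_sub Q S1" "posdef_sub Q S2" "\<And>x y. x \<in> S1 \<Longrightarrow> y \<in> S2 \<Longrightarrow> bf Q x y = 0"
  shows "posdef_sub Q {x + y |x y. x \<in> S1 \<and> y \<in> S2}"
    "dim {x + y |x y. x \<in> S1 \<and> y \<in> S2} = dim S1 + dim S2"
proof -
  have S: "subspace S1" "subspace S2" using assms unfolding posdef_sub_def by auto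
  have nonneg: "bf Q x x \<ge> 0" if "x \<in> S1 \<or> x \<in> S2" for x
    using that assms(1,2) unfolding posdef_sub_def by (cases "x = 0") (auto simp: bf_simps less_imp_le)
  have pythagoras: "bf Q (x + y) (x + y) = bf Q x x + bf Q y y" if "x \<in> S1" "y \<in> S2" for x y
    using assms(3)[OF that] bf_commute[of x y] by (simp add: bf_simps)
  show pos: "posdef_sub Q {x + y |x y. x \<in> S1 \<and> y \<in> S2}"
    unfolding posdef_sub_def
  proof (intro conjI ballI impI)
    show "subspace {x + y |x y. x \<in> S1 \<and> y \<in> S2}" using subspace_sums[OF S] .
    fix z assume "z \<in> {x + y |x y. x \<in> S1 \<and> y \<in> S2}" "z \<noteq> 0"
    then obtain x y where xy: "z = x + y" "x \<in> S1" "y \<in> S2" by auto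
    with \<open>z \<noteq> 0\<close> have "x \<noteq> 0 \<or> y \<noteq> 0" by auto
    then have "bf Q x x > 0 \<or> bf Q y y > 0"
      using xy(2,3) assms(1,2) unfolding posdef_sub_def by auto
    then show "bf Q z z > 0"
      using pythagoras[OF xy(2,3)] nonneg[of x] nonneg[of y] xy by auto
  qed
  have "S1 \<inter> S2 \<subseteq> {0}"
  proof
    fix z assume z: "z \<in> S1 \<inter> S2"
    then have "bf Q z z = 0" using assms(3) by blast
    then show "z \<in> {0}" using z assms(1) unfolding posdef_sub_def by force
  qed
  then have "dim (S1 \<inter> S2) = 0" by simp
  then show "dim {x + y |x y. x \<in> S1 \<and> y \<in> S2} = dim S1 + dim S2"
    using dim_sums_Int[OF S] by linarith
qed

lemma posdef_extend:
  assumes W: "subspace W" and x: "x \<in> W" "bf Q x x > 0"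
    and S: "posdef_sub Q S" "S \<subseteq> W \<inter> {y. bf Q x y = 0}"
  shows "posdef_sub Q {a + b |a b. a \<in> S \<and> b \<in> span {x}}"
    "{a + b |a b. a \<in> S \<and> b \<in> span {x}} \<subseteq> W"
    "dim {a + b |a b. a \<in> S \<and> b \<in> span {x}} = dim S + 1"
proof -
  have orth: "bf Q a b = 0" if "a \<in> S" "b \<in> span {x}" for a b
    using that S(2) bf_commute[of a x] unfolding span_singleton by (auto simp: bf_simps)
  note line = posdef_span_singleton[OF x(2)]
  show "posdef_sub Q {a + b |a b. a \<in> S \<and> b \<in> span {x}}"
    "dim {a + b |a b. a \<in> S \<and> b \<in> span {x}} = dim S + 1"
    using posdef_orthogonal_sum[OF S(1) line(1) orth] line(2) by auto
  show "{a + b |a b. a \<in> S \<and> b \<in> span {x}} \<subseteq> W"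
    using S(2) W x(1) unfolding span_singleton by (auto intro: subspace_add subspace_scale)
qed

end

lemma symmetric_form_uminus: "symmetric_form Q \<Longrightarrow> symmetric_form (- Q)"
  unfolding symmetric_form_def bf_uminus_form by simp

context symmetric_form
begin

lemma negdef_orthogonal_sum:
  assumes "negdef_sub Q S1" "negdef_sub Q S2" "\<And>x y. x \<in> S1 \<Longrightarrow> y \<in> S2 \<Longrightarrow> bf Q x y = 0"
  shows "negdef_sub Q {x + y |x y. x \<in> S1 \<and> y \<in> S2}"
    "dim {x + y |x y. x \<in> S1 \<and> y \<in> S2} = dim S1 + dim S2"
  using symmetric_form.posdef_orthogonal_sum[OF symmetric_form_uminus[OF symmetric_form_axioms],
      of S1 S2] assms
  unfolding negdef_sub_iff_posdef_sub_uminus bf_uminus_form by auto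

lemma negdef_extend:
  assumes W: "subspace W" and x: "x \<in> W" "bf Q x x < 0"
    and T: "negdef_sub Q T" "T \<subseteq> W \<inter> {y. bf Q x y = 0}"
  shows "negdef_sub Q {a + b |a b. a \<in> T \<and> b \<in> span {x}}"
    "{a + b |a b. a \<in> T \<and> b \<in> span {x}} \<subseteq> W"
    "dim {a + b |a b. a \<in> T \<and> b \<in> span {x}} = dim T + 1"
  using symmetric_form.posdef_extend[OF symmetric_form_uminus[OF symmetric_form_axioms] W x(1),
      of T] assms
  unfolding negdef_sub_iff_posdef_sub_uminus bf_uminus_form by auto

lemma polarization_totally_isotropic:
  assumes "subspace W" "\<And>x. x \<in> W \<Longrightarrow> bf Q x x = 0"
  shows "form_radical Q W = W"
proof -
  have "bf Q x y = 0" if "x \<in> W" "y \<in> W" for x y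
    using assms(2)[of "x + y"] assms(2)[OF that(1)] assms(2)[OF that(2)] bf_commute[of x y]
      subspace_add[OF assms(1) that] by (simp add: bf_simps)
  then show ?thesis unfolding form_radical_def by blast
qed

lemma split_off_anisotropic:
  assumes W: "subspace W" and x: "x \<in> W" "bf Q x x \<noteq> 0"
  defines "W' \<equiv> W \<inter> {y. bf Q x y = 0}"
  shows "W \<subseteq> {a + c *\<^sub>R x |a c. a \<in> W'}" "dim W \<le> dim W' + 1" "dim W' < dim W"
    "form_radical Q W' \<subseteq> form_radical Q W"
proof -
  show decomp: "W \<subseteq> {a + c *\<^sub>R x |a c. a \<in> W'}"
  proof
    fix y assume y: "y \<in> W"
    define c where "c = bf Q x y / bf Q x x"
    have "y - c *\<^sub>R x \<in> W'"
      using y x W unfolding W'_def c_def by (simp add: bf_simps subspace_diff subspace_scale)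
    then show "y \<in> {a + c *\<^sub>R x |a c. a \<in> W'}" by force
  qed
  have sW': "subspace W'" unfolding W'_def by (rule subspace_inter[OF W subspace_bf_kernel])
  have "W \<subseteq> {a + b |a b. a \<in> W' \<and> b \<in> span {x}}"
    using decomp by (force simp: span_singleton)
  then have "dim W \<le> dim {a + b |a b. a \<in> W' \<and> b \<in> span {x}}" by (rule dim_subset)
  also have "\<dots> \<le> dim W' + dim (span {x})"
    using dim_sums_Int[OF sW' subspace_span[of "{x}"]] by linarith
  also have "\<dots> \<le> dim W' + 1" by (simp add: dim_singleton)
  finally show "dim W \<le> dim W' + 1" .
  have "x \<notin> W'" using x unfolding W'_def by auto
  then have "span W' \<subset> span W"
    using x W sW' unfolding W'_def by (metis Int_lower1 psubsetI span_eq_iff)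
  then show "dim W' < dim W" by (rule dim_psubset)
  show "form_radical Q W' \<subseteq> form_radical Q W"
  proof
    fix r assume r: "r \<in> form_radical Q W'"
    have "bf Q r (a + c *\<^sub>R x) = 0" if "a \<in> W'" for a c
      using r that bf_commute[of r x] unfolding form_radical_def W'_def by (simp add: bf_simps)
    then show "r \<in> form_radical Q W"
      using r decomp unfolding form_radical_def W'_def by blast
  qed
qed

lemma pos_neg_radical_cover:
  assumes "subspace W"
  shows "\<exists>S T. posdef_sub Q S \<and> S \<subseteq> W \<and> negdef_sub Q T \<and> T \<subseteq> W
    \<and> dim W \<le> dim S + dim T + dim (form_radical Q W)"
  using assms
proof (induction "dim W" arbitrary: W rule: less_induct)
  case less
  show ?case
  proof (cases "\<forall>x\<in>W. bf Q x x = 0")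
    case True
    have "posdef_sub Q {0}" "negdef_sub Q {0}" "{0} \<subseteq> W"
      using less.prems subspace_0 by (auto simp: posdef_sub_def negdef_sub_def subspace_single_0)
    then show ?thesis
      using True polarization_totally_isotropic[OF less.prems] by force
  next
    case False
    then obtain x where x: "x \<in> W" "bf Q x x \<noteq> 0" by blast
    define W' where "W' = W \<inter> {y. bf Q x y = 0}"
    note split = split_off_anisotropic[OF less.prems x, folded W'_def]
    have "subspace W'" unfolding W'_def by (rule subspace_inter[OF less.prems subspace_bf_kernel])
    then obtain S T where ST: "posdef_sub Q S" "S \<subseteq> W'" "negdef_sub Q T" "T \<subseteq> W'"
      "dim W' \<le> dim S + dim T + dim (form_radical Q W')"
      using less.hyps[OF split(3)] by blast
    have W'W: "W' \<subseteq> W" unfolding W'_def by blast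
    have rad: "dim (form_radical Q W') \<le> dim (form_radical Q W)" using split(4) by (rule dim_subset)
    show ?thesis
    proof (cases "bf Q x x > 0")
      case True
      note ext = posdef_extend[OF less.prems x(1) True ST(1) ST(2)[unfolded W'_def]]
      have "dim W \<le> dim {a + b |a b. a \<in> S \<and> b \<in> span {x}} + dim T + dim (form_radical Q W)"
        using ext(3) ST(5) split(2) rad by linarith
      then show ?thesis using ext(1,2) ST(3,4) W'W by blast
    next
      case False
      then have "bf Q x x < 0" using x(2) by linarith
      note ext = negdef_extend[OF less.prems x(1) this ST(3) ST(4)[unfolded W'_def]]
      have "dim W \<le> dim S + dim {a + b |a b. a \<in> T \<and> b \<in> span {x}} + dim (form_radical Q W)"
        using ext(3) ST(5) split(2) rad by linarith
      then show ?thesis using ext(1,2) ST(1,2) W'W by blast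
    qed
  qed
qed

lemma form_radical_eq_0:
  assumes W: "subspace W" and S: "posdef_sub Q S" "S \<subseteq> W" and T: "negdef_sub Q T" "T \<subseteq> W"
    and dim: "dim W \<le> dim S + dim T"
  shows "form_radical Q W = {0}"
proof -
  have sS: "subspace S" and sT: "subspace T"
    using S(1) T(1) unfolding posdef_sub_def negdef_sub_def by auto
  have "S \<inter> T \<subseteq> {0}" using S(1) T(1) unfolding posdef_sub_def negdef_sub_def by force
  then have "dim (S \<inter> T) = 0" by simp
  then have "dim {s + t |s t. s \<in> S \<and> t \<in> T} = dim S + dim T"
    using dim_sums_Int[OF sS sT] by linarith
  moreover have "{s + t |s t. s \<in> S \<and> t \<in> T} \<subseteq> W"
    using S(2) T(2) W subspace_add by blast
  ultimately have W_sum: "{s + t |s t. s \<in> S \<and> t \<in> T} = W"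
    using subspace_dim_equal[OF subspace_sums[OF sS sT] W] dim by simp
  \<comment> \<open>For \<open>x = s + t\<close> in the radical, \<open>\<langle>s, s\<rangle> = \<langle>t, t\<rangle>\<close> is both \<open>\<ge> 0\<close> and \<open>\<le> 0\<close>.\<close>
  have "x = 0" if x: "x \<in> form_radical Q W" for x
  proof -
    obtain s t where st: "x = s + t" "s \<in> S" "t \<in> T"
      using x W_sum unfolding form_radical_def by blast
    have "bf Q x s = 0" "bf Q x t = 0" using x st S(2) T(2) unfolding form_radical_def by auto
    then have "bf Q s s + bf Q t s = 0" "bf Q s t + bf Q t t = 0"
      unfolding st(1) by (simp_all add: bf_simps)
    moreover have "bf Q s s \<ge> 0" "bf Q t t \<le> 0"
      using st(2,3) S(1) T(1) unfolding posdef_sub_def negdef_sub_def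
      by (cases "s = 0"; cases "t = 0"; auto simp: bf_simps less_imp_le)+
    ultimately have "bf Q s s = 0" "bf Q t t = 0" using bf_commute[of s t] by auto
    then have "s = 0" "t = 0"
      using st(2,3) S(1) T(1) unfolding posdef_sub_def negdef_sub_def by force+
    then show ?thesis using st(1) by simp
  qed
  then show ?thesis
    using subspace_0[OF W] unfolding form_radical_def by (auto simp: bf_simps)
qed

lemma has_signature_radical:
  assumes "has_signature Q W p q"
  shows "form_radical Q W = {0}"
  using assms form_radical_eq_0 unfolding has_signature_def by (metis order_refl)

lemma orth_real_commute:
  assumes "A \<subseteq> orth_real Q B"
  shows "B \<subseteq> orth_real Q A"
proof
  fix b assume b: "b \<in> B"
  have "bf Q b a = 0" if "a \<in> A" for a
    using assms b that bf_commute[of a b] unfolding orth_real_def by auto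
  then show "b \<in> orth_real Q A" unfolding orth_real_def by blast
qed

end

lemma orthogonal_comp_span:
  fixes U :: "'a::real_inner set"
  shows "(span U)\<^sup>\<bottom> = U\<^sup>\<bottom>"
proof
  show "(span U)\<^sup>\<bottom> \<subseteq> U\<^sup>\<bottom>"
    by (rule orthogonal_comp_anti_mono[OF span_superset])
  show "U\<^sup>\<bottom> \<subseteq> (span U)\<^sup>\<bottom>"
    unfolding orthogonal_comp_def
    by (auto intro: orthogonal_to_span simp: orthogonal_commute)
qed

lemma orth_real_eq_orthogonal_comp: "orth_real Q A = ((*v) Q ` A)\<^sup>\<bottom>"
  unfolding orth_real_def orthogonal_comp_def orthogonal_def bf_def by (auto simp: inner_commute)

lemma orth_real_span: "orth_real Q (span A) = orth_real Q A"
  unfolding orth_real_eq_orthogonal_comp span_linear_image[OF matrix_vector_mul_linear, symmetric]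
  by (rule orthogonal_comp_span)

lemma orth_real_mono: "A \<subseteq> B \<Longrightarrow> orth_real Q B \<subseteq> orth_real Q A"
  unfolding orth_real_def by blast

lemma span_subset_orth_real: "A \<subseteq> orth_real Q B \<Longrightarrow> span A \<subseteq> orth_real Q B"
  by (rule span_minimal[OF _ subspace_orth_real])

lemma dim_orthogonal_comp:
  fixes U :: "'a::euclidean_space set"
  shows "dim (U\<^sup>\<bottom>) + dim U = DIM('a)"
proof -
  have "dim {y \<in> UNIV. \<forall>x\<in>span U. orthogonal x y} + dim (span U) = dim (UNIV :: 'a set)"
    by (rule dim_subspace_orthogonal_to_vectors) auto
  then show ?thesis
    using orthogonal_comp_span[of U] unfolding orthogonal_comp_def by simp
qed

lemma dim_orth_real:
  fixes Q :: "real^'n^'n"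
  assumes "inj ((*v) Q)"
  shows "dim (orth_real Q A) + dim A = CARD('n)"
  using dim_orthogonal_comp[of "(*v) Q ` A"] dim_image_eq[OF matrix_vector_mul_linear, of Q A]
    assms unfolding orth_real_eq_orthogonal_comp by (simp add: inj_on_subset)

section \<open>Integral points of rational subspaces\<close>

lemma latt_closed:
  "0 \<in> latt" "x \<in> latt \<Longrightarrow> y \<in> latt \<Longrightarrow> x + y \<in> latt" "x \<in> latt \<Longrightarrow> y \<in> latt \<Longrightarrow> x - y \<in> latt"
  "x \<in> latt \<Longrightarrow> c \<in> \<int> \<Longrightarrow> c *\<^sub>R x \<in> latt"
  unfolding latt_def by simp_all

lemma inner_latt_Ints: "x \<in> latt \<Longrightarrow> y \<in> latt \<Longrightarrow> x \<bullet> y \<in> \<int>"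
  unfolding latt_def inner_vec_def by (auto intro!: Ints_sum Ints_mult)

lemma matrix_vector_mult_latt: "(\<And>i j. Q $ i $ j \<in> \<int>) \<Longrightarrow> y \<in> latt \<Longrightarrow> Q *v y \<in> latt"
  unfolding latt_def matrix_vector_mult_def by (auto intro!: Ints_sum Ints_mult)

lemma bf_latt_Ints: "(\<And>i j. Q $ i $ j \<in> \<int>) \<Longrightarrow> x \<in> latt \<Longrightarrow> y \<in> latt \<Longrightarrow> bf Q x y \<in> \<int>"
  unfolding bf_def by (intro inner_latt_Ints matrix_vector_mult_latt)

lemma sublattice_orth_latt: "sublattice (orth_latt Q A)"
  unfolding sublattice_def orth_latt_def by (auto simp: latt_closed bf_simps)

lemma span_Basis_latt: "span (latt \<inter> Basis) = (UNIV :: (real^'n) set)"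
proof -
  have "(Basis :: (real^'n) set) \<subseteq> latt"
    unfolding latt_def Basis_vec_def by (auto simp: axis_def)
  then show ?thesis using span_Basis by (simp add: Int_absorb1)
qed

lemma span_pivot_elimination:
  assumes "finite S" "s0 \<in> S" "a \<bullet> s0 \<noteq> 0"
  shows "span ((\<lambda>t. (a \<bullet> s0) *\<^sub>R t - (a \<bullet> t) *\<^sub>R s0) ` S) = span S \<inter> {x. a \<bullet> x = 0}"
    (is "span (?g ` S) = _")
proof
  have "?g t \<in> span S \<inter> {x. a \<bullet> x = 0}" if "t \<in> S" for t
    using that assms(2) by (simp add: span_diff span_scale span_base inner_diff_right algebra_simps)
  then show "span (?g ` S) \<subseteq> span S \<inter> {x. a \<bullet> x = 0}"
    by (intro span_minimal subspace_inter subspace_span subspace_hyperplane) auto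
  show "span S \<inter> {x. a \<bullet> x = 0} \<subseteq> span (?g ` S)"
  proof
    fix x assume x: "x \<in> span S \<inter> {x. a \<bullet> x = 0}"
    then obtain c where c: "x = (\<Sum>t\<in>S. c t *\<^sub>R t)"
      using span_finite[OF assms(1)] by auto
    have "(\<Sum>t\<in>S. c t *\<^sub>R ?g t) = (a \<bullet> s0) *\<^sub>R x - (\<Sum>t\<in>S. c t * (a \<bullet> t)) *\<^sub>R s0"
      unfolding c by (simp add: scaleR_sum_right scaleR_sum_left sum_subtractf algebra_simps)
    also have "(\<Sum>t\<in>S. c t * (a \<bullet> t)) = a \<bullet> x"
      unfolding c by (simp add: inner_sum_right)
    also have "a \<bullet> x = 0" using x by auto
    finally have "x = (1 / (a \<bullet> s0)) *\<^sub>R (\<Sum>t\<in>S. c t *\<^sub>R ?g t)" using assms(3) by simp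
    then show "x \<in> span (?g ` S)"
      by (simp add: span_scale span_sum span_base)
  qed
qed

lemma span_latt_orthogonal_comp_finite:
  fixes A :: "(real^'n) set"
  assumes "finite A" "A \<subseteq> latt"
  shows "\<exists>S \<subseteq> latt \<inter> A\<^sup>\<bottom>. finite S \<and> span S = A\<^sup>\<bottom>"
  using assms
proof (induction A rule: finite_induct)
  case empty
  show ?case
    using span_Basis_latt by (intro exI[of _ "latt \<inter> Basis"]) (auto simp: orthogonal_comp_def)
next
  case (insert a A)
  then obtain S where S: "S \<subseteq> latt \<inter> A\<^sup>\<bottom>" "finite S" "span S = A\<^sup>\<bottom>" by auto
  have a: "a \<in> latt" using insert.prems by auto
  have ins: "(insert a A)\<^sup>\<bottom> = span S \<inter> {x. a \<bullet> x = 0}"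
    unfolding S(3) orthogonal_comp_def orthogonal_def by auto
  show ?case
  proof (cases "\<forall>s\<in>S. a \<bullet> s = 0")
    case True
    then have "span S \<subseteq> {x. a \<bullet> x = 0}" by (intro span_minimal subspace_hyperplane) auto
    then show ?thesis using S unfolding ins by (intro exI[of _ S]) auto
  next
    case False
    then obtain s0 where s0: "s0 \<in> S" "a \<bullet> s0 \<noteq> 0" by blast
    let ?g = "\<lambda>t. (a \<bullet> s0) *\<^sub>R t - (a \<bullet> t) *\<^sub>R s0"
    have "?g ` S \<subseteq> latt" using s0(1) S(1) a by (auto intro!: latt_closed inner_latt_Ints)
    moreover have "span (?g ` S) = (insert a A)\<^sup>\<bottom>"
      unfolding ins by (rule span_pivot_elimination[OF S(2) s0])
    ultimately show ?thesis
      using S(2) span_superset[of "?g ` S"] by (intro exI[of _ "?g ` S"]) auto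
  qed
qed

lemma span_latt_orthogonal_comp:
  fixes A :: "(real^'n) set"
  assumes "A \<subseteq> latt"
  shows "span (latt \<inter> A\<^sup>\<bottom>) = A\<^sup>\<bottom>"
proof -
  obtain B where B: "B \<subseteq> A" "independent B" "A \<subseteq> span B" "card B = dim A"
    by (rule basis_exists)
  have "span B = span A"
  proof (rule subset_antisym)
    show "span B \<subseteq> span A" using B(1) by (rule span_mono)
    show "span A \<subseteq> span B" using B(3) by (simp add: span_minimal)
  qed
  then have BA: "B\<^sup>\<bottom> = A\<^sup>\<bottom>" by (metis orthogonal_comp_span)
  have "finite B" using B(2) by (rule finiteI_independent)
  moreover have "B \<subseteq> latt" using B(1) assms by (rule subset_trans)
  ultimately obtain S where S: "S \<subseteq> latt \<inter> B\<^sup>\<bottom>" "span S = B\<^sup>\<bottom>"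
    using span_latt_orthogonal_comp_finite[of B] by auto
  show ?thesis
  proof (rule subset_antisym)
    show "span (latt \<inter> A\<^sup>\<bottom>) \<subseteq> A\<^sup>\<bottom>"
      by (intro span_minimal subspace_orthogonal_comp) auto
    show "A\<^sup>\<bottom> \<subseteq> span (latt \<inter> A\<^sup>\<bottom>)"
      using span_mono[OF S(1)] S(2) unfolding BA by simp
  qed
qed

lemma span_latt_orth_real:
  assumes "\<And>i j. Q $ i $ j \<in> \<int>" "A \<subseteq> latt"
  shows "span (latt \<inter> orth_real Q A) = orth_real Q A"
  unfolding orth_real_eq_orthogonal_comp
  using assms by (intro span_latt_orthogonal_comp) (auto intro: matrix_vector_mult_latt)

section \<open>Oriented planes\<close>

lemma oclass_mem: "a * d - b * c > 0 \<Longrightarrow> (a *\<^sub>R x + b *\<^sub>R y, c *\<^sub>R x + d *\<^sub>R y) \<in> oclass x y"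
  unfolding oclass_def by blast

lemma oclass_change_subset:
  assumes "a * d - b * c > 0"
  shows "oclass (a *\<^sub>R x + b *\<^sub>R y) (c *\<^sub>R x + d *\<^sub>R y) \<subseteq> oclass x y"
proof
  fix z assume "z \<in> oclass (a *\<^sub>R x + b *\<^sub>R y) (c *\<^sub>R x + d *\<^sub>R y)"
  then obtain a' b' c' d' where z: "a' * d' - b' * c' > 0"
    "z = (a' *\<^sub>R (a *\<^sub>R x + b *\<^sub>R y) + b' *\<^sub>R (c *\<^sub>R x + d *\<^sub>R y),
          c' *\<^sub>R (a *\<^sub>R x + b *\<^sub>R y) + d' *\<^sub>R (c *\<^sub>R x + d *\<^sub>R y))"
    unfolding oclass_def by blast
  have "(a'*a + b'*c) * (c'*b + d'*d) - (a'*b + b'*d) * (c'*a + d'*c) = (a'*d' - b'*c') * (a*d - b*c)"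
    by (simp add: algebra_simps)
  also have "\<dots> > 0" using assms z(1) by simp
  finally have "((a'*a + b'*c) *\<^sub>R x + (a'*b + b'*d) *\<^sub>R y, (c'*a + d'*c) *\<^sub>R x + (c'*b + d'*d) *\<^sub>R y)
      \<in> oclass x y"
    by (rule oclass_mem)
  then show "z \<in> oclass x y" unfolding z(2) by (simp add: algebra_simps)
qed

lemma oclass_change:
  assumes D: "a * d - b * c > 0"
  shows "oclass (a *\<^sub>R x + b *\<^sub>R y) (c *\<^sub>R x + d *\<^sub>R y) = oclass x y"
proof
  show "oclass (a *\<^sub>R x + b *\<^sub>R y) (c *\<^sub>R x + d *\<^sub>R y) \<subseteq> oclass x y"
    using oclass_change_subset[OF D] .
  define E where "E = a * d - b * c"
  have E: "E > 0" using D unfolding E_def .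
  define X where "X = a *\<^sub>R x + b *\<^sub>R y"
  define Y where "Y = c *\<^sub>R x + d *\<^sub>R y"
  have "(d/E) *\<^sub>R X + (-b/E) *\<^sub>R Y = ((a*d - b*c)/E) *\<^sub>R x"
    unfolding X_def Y_def by (simp add: algebra_simps diff_divide_distrib)
  then have x: "(d/E) *\<^sub>R X + (-b/E) *\<^sub>R Y = x" using E unfolding E_def by simp
  have "(-c/E) *\<^sub>R X + (a/E) *\<^sub>R Y = ((a*d - b*c)/E) *\<^sub>R y"
    unfolding X_def Y_def by (simp add: algebra_simps diff_divide_distrib)
  then have y: "(-c/E) *\<^sub>R X + (a/E) *\<^sub>R Y = y" using E unfolding E_def by simp
  have "(d/E) * (a/E) - (-b/E) * (-c/E) = (a * d - b * c) / (E * E)"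
    using E by (simp add: field_simps)
  then have "(d/E) * (a/E) - (-b/E) * (-c/E) > 0" using E unfolding E_def by simp
  from oclass_change_subset[OF this, of X Y] have "oclass x y \<subseteq> oclass X Y"
    unfolding x y .
  then show "oclass x y \<subseteq> oclass (a *\<^sub>R x + b *\<^sub>R y) (c *\<^sub>R x + d *\<^sub>R y)"
    unfolding X_def Y_def .
qed

lemma pmap_oclass:
  assumes "linear f"
  shows "pmap f (oclass x y) = oclass (f x) (f y)"
  using assms unfolding pmap_def oclass_def
  by (force simp: linear_add linear_scale image_iff)

lemma pmap_pmap_involution:
  assumes "\<And>p. f (f p) = p"
  shows "pmap f (pmap f P) = P"
  unfolding pmap_def image_image by (simp add: assms case_prod_beta)

lemma plane_span_oclass: "plane_span (oclass x y) = span {x, y}"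
proof
  have "fst ` oclass x y \<subseteq> span {x, y}"
    unfolding oclass_def by (auto simp: span_pair_iff intro!: exI)
  then show "plane_span (oclass x y) \<subseteq> span {x, y}"
    unfolding plane_span_def by (simp add: span_minimal)
  have "(1 *\<^sub>R x + 0 *\<^sub>R y, 0 *\<^sub>R x + 1 *\<^sub>R y) \<in> oclass x y"
    "(0 *\<^sub>R x + 1 *\<^sub>R y, (-1) *\<^sub>R x + 0 *\<^sub>R y) \<in> oclass x y"
    by (rule oclass_mem; simp)+
  then have "{x, y} \<subseteq> fst ` oclass x y" by force
  then show "span {x, y} \<subseteq> plane_span (oclass x y)"
    unfolding plane_span_def by (rule span_mono)
qed

lemma exists_level_one_orthogonal_to_kernel:
  fixes G :: "'v::real_vector \<Rightarrow> 'v \<Rightarrow> real" and t :: "'v \<Rightarrow> real"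
  assumes G: "bilinear G" and "linear t"
    and pos: "\<And>a b. a \<noteq> 0 \<or> b \<noteq> 0 \<Longrightarrow> G (a *\<^sub>R x + b *\<^sub>R y) (a *\<^sub>R x + b *\<^sub>R y) > 0"
    and t: "t x \<noteq> 0 \<or> t y \<noteq> 0"
  obtains p q where "t (p *\<^sub>R x + q *\<^sub>R y) = 1"
    "G (p *\<^sub>R x + q *\<^sub>R y) (t y *\<^sub>R x - t x *\<^sub>R y) = 0"
proof -
  note bil = bilinear_ladd[OF G] bilinear_lmul[OF G]
  note lin = linear_add[OF \<open>linear t\<close>] linear_scale[OF \<open>linear t\<close>]
  define T where "T = t x * t x + t y * t y"
  define y0 where "y0 = t y *\<^sub>R x - t x *\<^sub>R y"
  have ty0: "t y0 = 0" unfolding y0_def by (simp add: lin linear_diff[OF \<open>linear t\<close>])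
  have Gy0: "G y0 y0 > 0"
    using pos[of "t y" "- t x"] t unfolding y0_def by (auto simp: algebra_simps)
  define k where "k = - G ((t x / T) *\<^sub>R x + (t y / T) *\<^sub>R y) y0 / G y0 y0"
  have x1: "(t x / T + k * t y) *\<^sub>R x + (t y / T - k * t x) *\<^sub>R y
      = ((t x / T) *\<^sub>R x + (t y / T) *\<^sub>R y) + k *\<^sub>R y0"
    unfolding y0_def by (simp add: algebra_simps)
  show ?thesis
  proof (rule that[of "t x / T + k * t y" "t y / T - k * t x"], unfold x1 y0_def[symmetric])
    show "t ((t x / T) *\<^sub>R x + (t y / T) *\<^sub>R y + k *\<^sub>R y0) = 1"
      using t by (simp add: lin ty0 T_def add_divide_distrib[symmetric])
    show "G ((t x / T) *\<^sub>R x + (t y / T) *\<^sub>R y + k *\<^sub>R y0) y0 = 0"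
      unfolding k_def using Gy0 by (simp add: bil)
  qed
qed

lemma conformal_basis_exists:
  fixes G :: "'v::real_vector \<Rightarrow> 'v \<Rightarrow> real" and t :: "'v \<Rightarrow> real"
  assumes G: "bilinear G" "\<And>p q. G p q = G q p" and "linear t"
    and pos: "\<And>a b. a \<noteq> 0 \<or> b \<noteq> 0 \<Longrightarrow> G (a *\<^sub>R x + b *\<^sub>R y) (a *\<^sub>R x + b *\<^sub>R y) > 0"
    and t: "t x \<noteq> 0 \<or> t y \<noteq> 0"
  obtains a b c d where "a * d - b * c > 0"
    "t (a *\<^sub>R x + b *\<^sub>R y) = 1" "t (c *\<^sub>R x + d *\<^sub>R y) = 0"
    "G (a *\<^sub>R x + b *\<^sub>R y) (c *\<^sub>R x + d *\<^sub>R y) = 0"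
    "G (a *\<^sub>R x + b *\<^sub>R y) (a *\<^sub>R x + b *\<^sub>R y) = G (c *\<^sub>R x + d *\<^sub>R y) (c *\<^sub>R x + d *\<^sub>R y)"
proof -
  note bil = bilinear_lmul[OF G(1)] bilinear_rmul[OF G(1)]
  note lin = linear_add[OF \<open>linear t\<close>] linear_scale[OF \<open>linear t\<close>]
  define y0 where "y0 = t y *\<^sub>R x - t x *\<^sub>R y"
  have ty0: "t y0 = 0" unfolding y0_def by (simp add: lin linear_diff[OF \<open>linear t\<close>])
  have Gy0: "G y0 y0 > 0"
    using pos[of "t y" "- t x"] t unfolding y0_def by (auto simp: algebra_simps)
  obtain p q where tx1: "t (p *\<^sub>R x + q *\<^sub>R y) = 1" and Gx1y0: "G (p *\<^sub>R x + q *\<^sub>R y) y0 = 0"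
    using exists_level_one_orthogonal_to_kernel[OF G(1) \<open>linear t\<close> pos t] unfolding y0_def by blast
  have "p \<noteq> 0 \<or> q \<noteq> 0" using tx1 by (auto simp: lin)
  then have Gx1: "G (p *\<^sub>R x + q *\<^sub>R y) (p *\<^sub>R x + q *\<^sub>R y) > 0" by (rule pos)
  \<comment> \<open>Rescale \<open>y0\<close> to the length of \<open>p x + q y\<close>; the negative sign makes the basis positive.\<close>
  define l where "l = - sqrt (G (p *\<^sub>R x + q *\<^sub>R y) (p *\<^sub>R x + q *\<^sub>R y) / G y0 y0)"
  have "l * l = G (p *\<^sub>R x + q *\<^sub>R y) (p *\<^sub>R x + q *\<^sub>R y) / G y0 y0"
    unfolding l_def using Gx1 Gy0 by simp
  then have Gy1: "G (l *\<^sub>R y0) (l *\<^sub>R y0) = G (p *\<^sub>R x + q *\<^sub>R y) (p *\<^sub>R x + q *\<^sub>R y)"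
    using Gy0 by (simp add: bil mult.assoc[symmetric])
  have y1: "(l * t y) *\<^sub>R x + (- (l * t x)) *\<^sub>R y = l *\<^sub>R y0"
    unfolding y0_def by (simp add: algebra_simps)
  have "p * (- (l * t x)) - q * (l * t y) = - l * t (p *\<^sub>R x + q *\<^sub>R y)"
    by (simp add: lin algebra_simps)
  also have "\<dots> > 0" unfolding tx1 l_def using Gx1 Gy0 by simp
  finally have det: "p * (- (l * t x)) - q * (l * t y) > 0" .
  show ?thesis
  proof (rule that[OF det tx1], unfold y1)
    show "t (l *\<^sub>R y0) = 0" by (simp add: lin ty0)
    show "G (p *\<^sub>R x + q *\<^sub>R y) (l *\<^sub>R y0) = 0" unfolding bil Gx1y0 by simp
    show "G (p *\<^sub>R x + q *\<^sub>R y) (p *\<^sub>R x + q *\<^sub>R y) = G (l *\<^sub>R y0) (l *\<^sub>R y0)"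
      unfolding Gy1 ..
  qed
qed

section \<open>The maps \<open>\<gamma>\<close> and \<open>\<xi>\<close>\<close>

text \<open>The form of \<open>\<Gamma>\<^sub>\<real> \<oplus> U\<^sub>\<real>\<close>, in which \<open>w, w\<^sup>*\<close> are isotropic with \<open>\<langle>w, w\<^sup>*\<rangle> = 1\<close>.\<close>
definition ext_bf :: "real^'n^'n \<Rightarrow> 'n ext \<Rightarrow> 'n ext \<Rightarrow> real" where
  "ext_bf Q p q = bf Q (fst p) (fst q) + fst (snd p) * snd (snd q) + snd (snd p) * fst (snd q)"

lemma ext_bf_simp [simp]: "ext_bf Q (x, a, b) (y, c, d) = bf Q x y + a * d + b * c"
  by (simp add: ext_bf_def)

lemma bilinear_ext_bf: "bilinear (ext_bf Q)"
  unfolding bilinear_def linear_iff ext_bf_def by (simp add: bf_simps algebra_simps)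

lemma linear_snd_snd: "linear (\<lambda>p :: 'a::real_vector \<times> 'b::real_vector \<times> 'c::real_vector. snd (snd p))"
  unfolding linear_iff by simp

lemma linear_gammaH1: "linear (gammaH1 Q B)"
  unfolding linear_iff gammaH1_def by (simp add: bf_simps)

lemma positive_plane_w_star_nonzero:
  assumes B: "has_signature Q B 1 q" and X: "fst X \<in> B" "fst Y \<in> B"
    and pos: "\<And>a b. a \<noteq> 0 \<or> b \<noteq> 0 \<Longrightarrow> ext_bf Q (a *\<^sub>R X + b *\<^sub>R Y) (a *\<^sub>R X + b *\<^sub>R Y) > 0"
  shows "snd (snd X) \<noteq> 0 \<or> snd (snd Y) \<noteq> 0"
proof (rule ccontr)
  have sB: "subspace B" using B unfolding has_signature_def by blast
  assume "\<not> ?thesis"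
  then have "ext_bf Q (a *\<^sub>R X + b *\<^sub>R Y) (a *\<^sub>R X + b *\<^sub>R Y)
      = bf Q (a *\<^sub>R fst X + b *\<^sub>R fst Y) (a *\<^sub>R fst X + b *\<^sub>R fst Y)" for a b
    by (simp add: ext_bf_def)
  then have "bf Q (a *\<^sub>R fst X + b *\<^sub>R fst Y) (a *\<^sub>R fst X + b *\<^sub>R fst Y) > 0"
    if "a \<noteq> 0 \<or> b \<noteq> 0" for a b
    using pos[OF that] by simp
  note plane = posdef_span_pair[OF this]
  have "span {fst X, fst Y} \<subseteq> B" using X sB by (simp add: span_minimal)
  from posdef_dim_le_signature[OF B plane(1) this] show False
    using plane(2) by simp
qed

context symmetric_form
begin

lemma ext_bf_commute: "ext_bf Q p q = ext_bf Q q p"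
  unfolding ext_bf_def by (simp add: bf_commute)

lemma conformal_pair_in_grpo:
  assumes "bf Q p1 p1 = c" "bf Q p2 p2 = c" "bf Q p1 p2 = 0" "c > 0"
    and "bf Q p1 \<omega> = 0" "bf Q p2 \<omega> = 0" "bf Q \<omega> \<omega> > 0"
  shows "(oclass p1 p2, \<omega>) \<in> grpo Q"
proof -
  have gram: "bf Q (a *\<^sub>R p1 + b *\<^sub>R p2) (a *\<^sub>R p1 + b *\<^sub>R p2) = (a * a + b * b) * c" for a b
    using assms(1-3) bf_commute[of p2 p1] by (simp add: bf_simps algebra_simps)
  have pos: "bf Q (a *\<^sub>R p1 + b *\<^sub>R p2) (a *\<^sub>R p1 + b *\<^sub>R p2) > 0" if "a \<noteq> 0 \<or> b \<noteq> 0" for a b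
    unfolding gram using that \<open>c > 0\<close> by (simp add: sum_squares_gt_zero_iff)
  then have "a = 0 \<and> b = 0" if "a *\<^sub>R p1 + b *\<^sub>R p2 = 0" for a b
    using that by (metis bf_zero_left less_irrefl)
  moreover have "bf Q z \<omega> = 0" if "z \<in> span {p1, p2}" for z
    using that assms(5,6) by (auto simp: span_pair_iff bf_simps)
  ultimately show ?thesis
    unfolding grpo_def using posdef_span_pair[OF pos] assms(7) unfolding posdef_sub_def by blast
qed

lemma gamma_plane_conformal:
  fixes B \<omega> :: "real^'n"
  defines "X \<equiv> (B, (bf Q \<omega> \<omega> - bf Q B B) / 2, 1)" and "Y \<equiv> (\<omega>, - bf Q \<omega> B, 0)"
  shows "ext_bf Q X X = bf Q \<omega> \<omega>" "ext_bf Q Y Y = bf Q \<omega> \<omega>" "ext_bf Q X Y = 0"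
  unfolding X_def Y_def by (simp_all add: bf_commute[of B \<omega>])

text \<open>A conformal basis adapted to the \<open>w\<^sup>*\<close>-coordinate has the shape of the second plane of
  \<open>gamma_map\<close>.\<close>
lemma gamma_plane_of_positive_plane:
  assumes B: "has_signature Q B 1 q" and X: "fst X \<in> B" "fst Y \<in> B"
    and pos: "\<And>a b. a \<noteq> 0 \<or> b \<noteq> 0 \<Longrightarrow> ext_bf Q (a *\<^sub>R X + b *\<^sub>R Y) (a *\<^sub>R X + b *\<^sub>R Y) > 0"
  obtains B' \<omega>' where "B' \<in> B" "\<omega>' \<in> B" "bf Q \<omega>' \<omega>' > 0"
    "oclass X Y = oclass (B', (bf Q \<omega>' \<omega>' - bf Q B' B') / 2, 1) (\<omega>', - bf Q \<omega>' B', 0)"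
proof -
  have sB: "subspace B" using B unfolding has_signature_def by blast
  have t: "snd (snd X) \<noteq> 0 \<or> snd (snd Y) \<noteq> 0"
    by (rule positive_plane_w_star_nonzero[OF B X pos])
  obtain a b c d where abcd: "a * d - b * c > 0"
    "snd (snd (a *\<^sub>R X + b *\<^sub>R Y)) = 1" "snd (snd (c *\<^sub>R X + d *\<^sub>R Y)) = 0"
    "ext_bf Q (a *\<^sub>R X + b *\<^sub>R Y) (c *\<^sub>R X + d *\<^sub>R Y) = 0"
    "ext_bf Q (a *\<^sub>R X + b *\<^sub>R Y) (a *\<^sub>R X + b *\<^sub>R Y)
      = ext_bf Q (c *\<^sub>R X + d *\<^sub>R Y) (c *\<^sub>R X + d *\<^sub>R Y)"
    using conformal_basis_exists[OF bilinear_ext_bf ext_bf_commute linear_snd_snd pos t] by blast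
  define B' where "B' = fst (a *\<^sub>R X + b *\<^sub>R Y)"
  define \<omega>' where "\<omega>' = fst (c *\<^sub>R X + d *\<^sub>R Y)"
  obtain s s' where X': "a *\<^sub>R X + b *\<^sub>R Y = (B', s, 1)" and Y': "c *\<^sub>R X + d *\<^sub>R Y = (\<omega>', s', 0)"
    using abcd(2,3) unfolding B'_def \<omega>'_def by (metis prod.collapse)
  have "B' \<in> B" "\<omega>' \<in> B"
    unfolding B'_def \<omega>'_def using X sB by (simp_all add: subspace_add subspace_scale)
  moreover have "c \<noteq> 0 \<or> d \<noteq> 0" using abcd(1) by auto
  then have "bf Q \<omega>' \<omega>' > 0" using pos[of c d] unfolding Y' by simp
  moreover have "s = (bf Q \<omega>' \<omega>' - bf Q B' B') / 2" "s' = - bf Q \<omega>' B'"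
    using abcd(4,5) bf_commute[of B' \<omega>'] unfolding X' Y' by simp_all
  moreover have "oclass X Y = oclass (a *\<^sub>R X + b *\<^sub>R Y) (c *\<^sub>R X + d *\<^sub>R Y)"
    by (rule oclass_change[OF abcd(1), symmetric])
  ultimately show ?thesis using that unfolding X' Y' by blast
qed

end

locale hyperbolic_pair = symmetric_form +
  fixes v vs :: "real^'n"
  assumes v_isotropic: "bf Q v v = 0" and vs_isotropic: "bf Q vs vs = 0" and v_vs: "bf Q v vs = 1"
begin

lemma vs_v: "bf Q vs v = 1"
  using v_vs bf_commute by metis

definition perp_proj :: "real^'n \<Rightarrow> real^'n" where
  "perp_proj x = x - bf Q x vs *\<^sub>R v - bf Q x v *\<^sub>R vs"

lemma perp_proj_orthogonal: "perp_proj x \<in> orth_real Q {v, vs}"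
  unfolding perp_proj_def orth_real_def by (simp add: bf_simps v_isotropic vs_isotropic v_vs vs_v)

lemma perp_proj_id: "x \<in> orth_real Q {v, vs} \<Longrightarrow> perp_proj x = x"
  unfolding perp_proj_def orth_real_def by simp

lemma v_vs_independent:
  assumes "a *\<^sub>R v + b *\<^sub>R vs = 0"
  shows "a = 0 \<and> b = 0"
proof -
  have "bf Q (a *\<^sub>R v + b *\<^sub>R vs) v = 0" "bf Q (a *\<^sub>R v + b *\<^sub>R vs) vs = 0"
    unfolding assms by (simp_all add: bf_simps)
  then show ?thesis by (simp add: bf_simps v_isotropic vs_isotropic v_vs vs_v)
qed

lemma perp_proj_decomposition: "x = perp_proj x + bf Q x vs *\<^sub>R v + bf Q x v *\<^sub>R vs"
  unfolding perp_proj_def by simp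

lemma xi_eq: "xi Q v vs (x, a, b) = (perp_proj x + a *\<^sub>R v + b *\<^sub>R vs, bf Q x vs, bf Q x v)"
  unfolding xi_def perp_proj_def by simp

lemma linear_xi: "linear (xi Q v vs)"
  unfolding linear_iff xi_def by (auto simp: bf_simps algebra_simps)

lemma xi_involution: "xi Q v vs (xi Q v vs p) = p"
  by (cases p) (simp add: xi_def bf_simps algebra_simps v_isotropic vs_isotropic v_vs vs_v)

lemma xi_isometry: "ext_bf Q (xi Q v vs p) (xi Q v vs q) = ext_bf Q p q"
proof (cases p, cases q)
  fix x a b y c d assume pq: "p = (x, a, b)" "q = (y, c, d)"
  show ?thesis
    unfolding pq xi_def
    by (simp add: bf_simps algebra_simps v_isotropic vs_isotropic v_vs vs_v
        bf_commute[of v x] bf_commute[of vs x] bf_commute[of v y] bf_commute[of vs y])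
qed

lemma xi_tilde_involution: "xi_tilde Q v vs (xi_tilde Q v vs H) = H"
  by (cases H) (simp add: xi_tilde_def pmap_pmap_involution xi_involution)

lemma xi_of_perp:
  assumes "x \<in> orth_real Q {v, vs}"
  shows "xi Q v vs (x, a, b) = (x + a *\<^sub>R v + b *\<^sub>R vs, 0, 0)"
  using assms unfolding xi_eq perp_proj_id[OF assms] by (simp add: orth_real_def)

lemma mirror_second_plane:
  assumes B: "has_signature Q B 1 q" and proj: "perp_proj ` orth_real Q A \<subseteq> B"
    and xy: "x \<in> orth_real Q A" "y \<in> orth_real Q A"
    and ind: "\<And>a b. a *\<^sub>R x + b *\<^sub>R y = 0 \<Longrightarrow> a = 0 \<and> b = 0"
    and pos: "\<And>z. z \<in> span {x, y} \<Longrightarrow> z \<noteq> 0 \<Longrightarrow> bf Q z z > 0"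
  obtains B' \<omega>' where "B' \<in> B" "\<omega>' \<in> B" "bf Q \<omega>' \<omega>' > 0"
    "pmap (xi Q v vs) (oclass (x, 0, 0) (y, 0, 0))
      = oclass (B', (bf Q \<omega>' \<omega>' - bf Q B' B') / 2, 1) (\<omega>', - bf Q \<omega>' B', 0)"
proof -
  have "ext_bf Q (a *\<^sub>R xi Q v vs (x, 0, 0) + b *\<^sub>R xi Q v vs (y, 0, 0))
      (a *\<^sub>R xi Q v vs (x, 0, 0) + b *\<^sub>R xi Q v vs (y, 0, 0)) > 0"
    if "a \<noteq> 0 \<or> b \<noteq> 0" for a b
  proof -
    have "a *\<^sub>R x + b *\<^sub>R y \<in> span {x, y}" unfolding span_pair_iff by blast
    moreover have "a *\<^sub>R x + b *\<^sub>R y \<noteq> 0" using ind that by blast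
    ultimately have "bf Q (a *\<^sub>R x + b *\<^sub>R y) (a *\<^sub>R x + b *\<^sub>R y) > 0" by (rule pos)
    moreover have "a *\<^sub>R xi Q v vs (x, 0, 0) + b *\<^sub>R xi Q v vs (y, 0, 0)
        = xi Q v vs (a *\<^sub>R x + b *\<^sub>R y, 0, 0)"
      using linear_xi by (simp add: linear_add[symmetric] linear_scale[symmetric])
    ultimately show ?thesis by (simp add: xi_isometry)
  qed
  moreover have "fst (xi Q v vs (x, 0, 0)) \<in> B" "fst (xi Q v vs (y, 0, 0)) \<in> B"
    using proj xy by (auto simp: xi_eq)
  ultimately obtain B' \<omega>' where "B' \<in> B" "\<omega>' \<in> B" "bf Q \<omega>' \<omega>' > 0"
    "oclass (xi Q v vs (x, 0, 0)) (xi Q v vs (y, 0, 0))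
      = oclass (B', (bf Q \<omega>' \<omega>' - bf Q B' B') / 2, 1) (\<omega>', - bf Q \<omega>' B', 0)"
    using gamma_plane_of_positive_plane[OF B] by metis
  then show ?thesis using that pmap_oclass[OF linear_xi] by metis
qed

lemma mirror_first_plane:
  assumes A: "A \<subseteq> orth_real Q {v, vs}" "A \<subseteq> orth_real Q B" and B: "B \<subseteq> orth_real Q {v, vs}"
    and "B0 \<in> A" "\<omega> \<in> A" "bf Q \<omega> \<omega> > 0" "B' \<in> B" "\<omega>' \<in> B" "bf Q \<omega>' \<omega>' > 0"
  defines "\<alpha> \<equiv> (bf Q \<omega> \<omega> - bf Q B0 B0) / 2"
  defines "p1 \<equiv> B0 + \<alpha> *\<^sub>R v + vs" and "p2 \<equiv> \<omega> - bf Q \<omega> B0 *\<^sub>R v"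
  shows "((oclass p1 p2, \<omega>'), B') \<in> Tbar Q B"
    "pmap (gammaH1 Q B') (oclass p1 p2) = pmap (xi Q v vs) (oclass (B0, \<alpha>, 1) (\<omega>, - bf Q \<omega> B0, 0))"
proof -
  have xi: "xi Q v vs (B0, \<alpha>, 1) = (p1, 0, 0)" "xi Q v vs (\<omega>, - bf Q \<omega> B0, 0) = (p2, 0, 0)"
    unfolding p1_def p2_def using A(1) \<open>B0 \<in> A\<close> \<open>\<omega> \<in> A\<close> by (auto simp: xi_of_perp)
  have "ext_bf Q (p1, 0, 0) (p1, 0, 0) = ext_bf Q (B0, \<alpha>, 1) (B0, \<alpha>, 1)"
    "ext_bf Q (p2, 0, 0) (p2, 0, 0) = ext_bf Q (\<omega>, - bf Q \<omega> B0, 0) (\<omega>, - bf Q \<omega> B0, 0)"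
    "ext_bf Q (p1, 0, 0) (p2, 0, 0) = ext_bf Q (B0, \<alpha>, 1) (\<omega>, - bf Q \<omega> B0, 0)"
    unfolding xi[symmetric] by (rule xi_isometry)+
  then have "bf Q p1 p1 = bf Q \<omega> \<omega>" "bf Q p2 p2 = bf Q \<omega> \<omega>" "bf Q p1 p2 = 0"
    using gamma_plane_conformal[of B0 \<omega>] unfolding \<alpha>_def by simp_all
  moreover have orth: "bf Q p1 b = 0" "bf Q p2 b = 0" if "b \<in> B" for b
  proof -
    have "bf Q b v = 0" "bf Q b vs = 0"
      using B that unfolding orth_real_def by blast+
    then have "bf Q v b = 0" "bf Q vs b = 0" by (simp_all add: bf_commute[of _ b])
    moreover have "bf Q B0 b = 0" "bf Q \<omega> b = 0"
      using A(2) that \<open>B0 \<in> A\<close> \<open>\<omega> \<in> A\<close> unfolding orth_real_def by blast+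
    ultimately show "bf Q p1 b = 0" "bf Q p2 b = 0" unfolding p1_def p2_def by (simp_all add: bf_simps)
  qed
  ultimately have "(oclass p1 p2, \<omega>') \<in> grpo Q"
    using \<open>bf Q \<omega> \<omega> > 0\<close> \<open>\<omega>' \<in> B\<close> \<open>bf Q \<omega>' \<omega>' > 0\<close> by (intro conformal_pair_in_grpo) auto
  moreover have "plane_span (oclass p1 p2) \<subseteq> orth_real Q B"
    unfolding plane_span_oclass using orth bf_commute
    by (intro span_minimal subspace_orth_real) (auto simp: orth_real_def)
  ultimately show "((oclass p1 p2, \<omega>'), B') \<in> Tbar Q B"
    unfolding Tbar_def using \<open>\<omega>' \<in> B\<close> \<open>B' \<in> B\<close> by blast
  have "gammaH1 Q B' p1 = (p1, 0, 0)" "gammaH1 Q B' p2 = (p2, 0, 0)"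
    using orth[OF \<open>B' \<in> B\<close>] by (simp_all add: gammaH1_def)
  then show "pmap (gammaH1 Q B') (oclass p1 p2)
      = pmap (xi Q v vs) (oclass (B0, \<alpha>, 1) (\<omega>, - bf Q \<omega> B0, 0))"
    by (simp add: pmap_oclass linear_gammaH1 linear_xi xi)
qed

lemma mirror_image_subset:
  assumes A: "A \<subseteq> orth_real Q {v, vs}" "A \<subseteq> orth_real Q B"
    and B: "has_signature Q B 1 q" "B \<subseteq> orth_real Q {v, vs}"
    and proj: "perp_proj ` orth_real Q A \<subseteq> B"
  shows "xi_tilde Q v vs ` gamma_map Q ` Tbar Q A \<subseteq> gamma_map Q ` Tbar Q B"
proof
  fix Z assume "Z \<in> xi_tilde Q v vs ` gamma_map Q ` Tbar Q A"
  then obtain P \<omega> B0 where T: "((P, \<omega>), B0) \<in> Tbar Q A"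
    and Z: "Z = xi_tilde Q v vs (gamma_map Q ((P, \<omega>), B0))" by auto
  then have "(P, \<omega>) \<in> grpo Q" "\<omega> \<in> A" "B0 \<in> A" "plane_span P \<subseteq> orth_real Q A"
    unfolding Tbar_def by auto
  then obtain x y where P: "P = oclass x y" and "bf Q \<omega> \<omega> > 0"
    and ind: "\<And>a b. a *\<^sub>R x + b *\<^sub>R y = 0 \<Longrightarrow> a = 0 \<and> b = 0"
    and pos: "\<And>z. z \<in> span {x, y} \<Longrightarrow> z \<noteq> 0 \<Longrightarrow> bf Q z z > 0"
    unfolding grpo_def by blast
  have xy: "x \<in> orth_real Q A" "y \<in> orth_real Q A"
    using \<open>plane_span P \<subseteq> orth_real Q A\<close> unfolding P plane_span_oclass by (auto intro: span_base)
  then have "gammaH1 Q B0 x = (x, 0, 0)" "gammaH1 Q B0 y = (y, 0, 0)"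
    using \<open>B0 \<in> A\<close> by (auto simp: gammaH1_def orth_real_def)
  then have H1: "pmap (gammaH1 Q B0) P = oclass (x, 0, 0) (y, 0, 0)"
    unfolding P by (simp add: pmap_oclass linear_gammaH1)
  obtain B' \<omega>' where "B' \<in> B" "\<omega>' \<in> B" "bf Q \<omega>' \<omega>' > 0"
    and H2: "pmap (xi Q v vs) (oclass (x, 0, 0) (y, 0, 0))
      = oclass (B', (bf Q \<omega>' \<omega>' - bf Q B' B') / 2, 1) (\<omega>', - bf Q \<omega>' B', 0)"
    using mirror_second_plane[OF B(1) proj xy ind pos] by blast
  note first = mirror_first_plane[OF A B(2) \<open>B0 \<in> A\<close> \<open>\<omega> \<in> A\<close> \<open>bf Q \<omega> \<omega> > 0\<close>
      \<open>B' \<in> B\<close> \<open>\<omega>' \<in> B\<close> \<open>bf Q \<omega>' \<omega>' > 0\<close>]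
  have "Z = gamma_map Q ((oclass (B0 + ((bf Q \<omega> \<omega> - bf Q B0 B0) / 2) *\<^sub>R v + vs)
      (\<omega> - bf Q \<omega> B0 *\<^sub>R v), \<omega>'), B')"
    unfolding Z gamma_map_def xi_tilde_def by (simp add: H1 H2 first(2))
  with first(1) show "Z \<in> gamma_map Q ` Tbar Q B" by blast
qed

lemma mirror_image_eq:
  assumes A: "has_signature Q A 1 p" "A \<subseteq> orth_real Q {v, vs}"
    and B: "has_signature Q B 1 q" "B \<subseteq> orth_real Q {v, vs}"
    and AB: "A \<subseteq> orth_real Q B"
    and proj: "perp_proj ` orth_real Q A \<subseteq> B" "perp_proj ` orth_real Q B \<subseteq> A"
  shows "xi_tilde Q v vs ` gamma_map Q ` Tbar Q A = gamma_map Q ` Tbar Q B"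
proof
  show "xi_tilde Q v vs ` gamma_map Q ` Tbar Q A \<subseteq> gamma_map Q ` Tbar Q B"
    by (rule mirror_image_subset[OF A(2) AB B proj(1)])
  show "gamma_map Q ` Tbar Q B \<subseteq> xi_tilde Q v vs ` gamma_map Q ` Tbar Q A"
  proof
    fix H assume "H \<in> gamma_map Q ` Tbar Q B"
    then have "xi_tilde Q v vs H \<in> gamma_map Q ` Tbar Q A"
      using mirror_image_subset[OF B(2) orth_real_commute[OF AB] A proj(2)] by blast
    then show "H \<in> xi_tilde Q v vs ` gamma_map Q ` Tbar Q A"
      by (rule image_eqI[of H "xi_tilde Q v vs", OF xi_tilde_involution[of H, symmetric]])
  qed
qed

lemma orth_latt_decomposition:
  assumes Q: "\<And>i j. Q $ i $ j \<in> \<int>" and U: "v \<in> orth_latt Q N" "vs \<in> orth_latt Q N"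
  shows "orth_latt Q N = {y + of_int a *\<^sub>R v + of_int b *\<^sub>R vs | y a b.
    y \<in> orth_latt Q N \<inter> {x \<in> latt. bf Q x v = 0 \<and> bf Q x vs = 0}}"
proof
  have U_latt: "v \<in> latt" "vs \<in> latt" and U_N: "\<And>n. n \<in> N \<Longrightarrow> bf Q v n = 0 \<and> bf Q vs n = 0"
    using U unfolding orth_latt_def by auto
  show "orth_latt Q N \<subseteq> {y + of_int a *\<^sub>R v + of_int b *\<^sub>R vs | y a b.
    y \<in> orth_latt Q N \<inter> {x \<in> latt. bf Q x v = 0 \<and> bf Q x vs = 0}}"
  proof
    fix x assume x: "x \<in> orth_latt Q N"
    then have "x \<in> latt" unfolding orth_latt_def by blast
    then obtain a b where ab: "bf Q x vs = of_int a" "bf Q x v = of_int b"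
      using bf_latt_Ints[OF Q _ U_latt(2)] bf_latt_Ints[OF Q _ U_latt(1)] by (metis Ints_cases)
    have "perp_proj x \<in> latt"
      unfolding perp_proj_def ab using \<open>x \<in> latt\<close> U_latt by (simp add: latt_closed)
    moreover have "bf Q (perp_proj x) n = 0" if "n \<in> N" for n
      using x U_N[OF that] that unfolding perp_proj_def orth_latt_def by (simp add: bf_simps)
    ultimately have "perp_proj x \<in> orth_latt Q N \<inter> {x \<in> latt. bf Q x v = 0 \<and> bf Q x vs = 0}"
      using perp_proj_orthogonal[of x] unfolding orth_latt_def orth_real_def by auto
    then show "x \<in> {y + of_int a *\<^sub>R v + of_int b *\<^sub>R vs | y a b.
        y \<in> orth_latt Q N \<inter> {x \<in> latt. bf Q x v = 0 \<and> bf Q x vs = 0}}"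
      using perp_proj_decomposition[of x] unfolding ab by blast
  qed
  show "{y + of_int a *\<^sub>R v + of_int b *\<^sub>R vs | y a b.
      y \<in> orth_latt Q N \<inter> {x \<in> latt. bf Q x v = 0 \<and> bf Q x vs = 0}} \<subseteq> orth_latt Q N"
    using U_latt U_N unfolding orth_latt_def by (auto simp: latt_closed bf_simps)
qed

lemma perp_proj_orth_real_subset:
  assumes sum: "orth_real Q {v, vs} \<subseteq> {a + b |a b. a \<in> A \<and> b \<in> B}"
    and A: "A \<subseteq> orth_real Q {v, vs}" "form_radical Q A = {0}" and BA: "B \<subseteq> orth_real Q A"
  shows "perp_proj ` orth_real Q A \<subseteq> B"
proof
  fix z assume "z \<in> perp_proj ` orth_real Q A"
  then obtain x where x: "x \<in> orth_real Q A" "z = perp_proj x" by blast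
  then obtain a b where ab: "z = a + b" "a \<in> A" "b \<in> B"
    using sum perp_proj_orthogonal by blast
  have "bf Q a y = 0" if "y \<in> A" for y
  proof -
    have "bf Q x y = 0" "bf Q b y = 0" using x(1) ab(3) BA that unfolding orth_real_def by auto
    moreover have "bf Q v y = 0" "bf Q vs y = 0"
      using A(1) that bf_commute unfolding orth_real_def by auto
    moreover have "a = perp_proj x - b" using ab(1) x(2) by simp
    ultimately show ?thesis unfolding perp_proj_def by (simp add: bf_simps)
  qed
  then have "a = 0" using A(2) ab(2) unfolding form_radical_def by blast
  then show "z \<in> B" using ab by simp
qed

end

section \<open>The K3 lattice\<close>

lemma mE8_commute: "mE8 i j = mE8 j i"
  unfolding mE8_def by (simp add: disj_commute eq_commute)

lemma K3gram_commute: "K3gram i j = K3gram j i"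
  unfolding K3gram_def using mE8_commute by auto

definition qE8 :: "(nat \<Rightarrow> real) \<Rightarrow> real" where
  "qE8 y = - 2 * (y 0 * y 0 + y 1 * y 1 + y 2 * y 2 + y 3 * y 3 + y 4 * y 4 + y 5 * y 5 + y 6 * y 6
      + y 7 * y 7)
    + 2 * (y 0 * y 2 + y 1 * y 3 + y 2 * y 3 + y 3 * y 4 + y 4 * y 5 + y 5 * y 6 + y 6 * y 7)"

lemma upt_0_22: "[0..<22] = [0,1,2,3,4,5,6,7,8,9,10,11,12,13,14,15,16,17,18,19,20,21]"
  by (simp add: upt_rec)

lemma K3gram_quadratic_form:
  "(\<Sum>k\<in>{0..<22}. \<Sum>l\<in>{0..<22}. y k * of_int (K3gram k l) * y l) =
    qE8 y + qE8 (\<lambda>i. y (i + 8)) + 2 * (y 16 * y 17 + y 18 * y 19 + y 20 * y 21)"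
  unfolding atLeastLessThan_upt sum_set_upt_conv_sum_list_nat upt_0_22
  by (simp add: qE8_def K3gram_def mE8_def e8edge_def algebra_simps)

text \<open>Completing squares along the Dynkin diagram of \<open>E\<^sub>8\<close>.\<close>
lemma qE8_sum_of_squares:
  "- qE8 y = 2 * (y 0 - y 2 / 2)\<^sup>2 + 2 * (y 1 - y 3 / 2)\<^sup>2 + 3/2 * (y 2 - 2/3 * y 3)\<^sup>2
    + 5/6 * (y 3 - 6/5 * y 4)\<^sup>2 + 4/5 * (y 4 - 5/4 * y 5)\<^sup>2 + 3/4 * (y 5 - 4/3 * y 6)\<^sup>2
    + 2/3 * (y 6 - 3/2 * y 7)\<^sup>2 + 1/2 * (y 7)\<^sup>2"
  unfolding qE8_def by (simp add: power2_eq_square field_simps)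

lemma qE8_nonpos: "qE8 y \<le> 0"
proof -
  have "- qE8 y \<ge> 0" unfolding qE8_sum_of_squares by (intro add_nonneg_nonneg) simp_all
  then show ?thesis by linarith
qed

lemma qE8_eq_0_iff: "qE8 y = 0 \<longleftrightarrow> (\<forall>i<8. y i = 0)"
proof
  assume "qE8 y = 0"
  then have "(y 0 - y 2 / 2)\<^sup>2 = 0" "(y 1 - y 3 / 2)\<^sup>2 = 0" "(y 2 - 2/3 * y 3)\<^sup>2 = 0"
    "(y 3 - 6/5 * y 4)\<^sup>2 = 0" "(y 4 - 5/4 * y 5)\<^sup>2 = 0" "(y 5 - 4/3 * y 6)\<^sup>2 = 0"
    "(y 6 - 3/2 * y 7)\<^sup>2 = 0" "(y 7)\<^sup>2 = 0"
    using qE8_sum_of_squares[of y]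
      zero_le_power2[of "y 0 - y 2 / 2"] zero_le_power2[of "y 1 - y 3 / 2"]
      zero_le_power2[of "y 2 - 2/3 * y 3"] zero_le_power2[of "y 3 - 6/5 * y 4"]
      zero_le_power2[of "y 4 - 5/4 * y 5"] zero_le_power2[of "y 5 - 4/3 * y 6"]
      zero_le_power2[of "y 6 - 3/2 * y 7"] zero_le_power2[of "y 7"]
    by linarith+
  then have "y 7 = 0" "y 6 = 0" "y 5 = 0" "y 4 = 0" "y 3 = 0" "y 2 = 0" "y 1 = 0" "y 0 = 0"
    by simp_all
  then show "\<forall>i<8. y i = 0" by (auto simp: less_Suc_eq numeral_eq_Suc)
qed (simp add: qE8_def)

locale k3_form =
  fixes e :: "'n::finite \<Rightarrow> nat" and Q :: "real^'n^'n"
  assumes e_bij: "bij_betw e UNIV {0..<22}"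
    and gram: "\<And>i j. Q $ i $ j = of_int (K3gram (e i) (e j))"
begin

lemma e_inv_e: "k < 22 \<Longrightarrow> e (inv e k) = k"
  using bij_betw_inv_into_right[OF e_bij, of k] by simp

lemma inv_e_e: "inv e (e i) = i"
  using e_bij by (simp add: bij_betw_def)

lemma CARD_eq_22: "CARD('n) = 22"
  using bij_betw_same_card[OF e_bij] by simp

lemma Q_integral: "Q $ i $ j \<in> \<int>"
  by (simp add: gram)

lemma sum_reindex: "(\<Sum>i\<in>UNIV. g i) = (\<Sum>k\<in>{0..<22}. g (inv e k))"
  using sum.reindex_bij_betw[OF e_bij, of "\<lambda>k. g (inv e k)"] by (simp add: inv_e_e)

lemma vec_eq_0_iff_coords: "(x :: real^'n) = 0 \<longleftrightarrow> (\<forall>k<22. x $ inv e k = 0)"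
proof
  assume "\<forall>k<22. x $ inv e k = 0"
  then have "x $ i = 0" for i
    using e_bij inv_e_e[of i] by (metis UNIV_I atLeastLessThan_iff bij_betwE)
  then show "x = 0" by (simp add: vec_eq_iff)
qed simp

lemma inner_coords: "(x :: real^'n) \<bullet> z = (\<Sum>k\<in>{0..<22}. x $ inv e k * z $ inv e k)"
  unfolding inner_vec_def by (simp add: sum_reindex)

lemma bf_diag_coords:
  "bf Q x x = qE8 (\<lambda>k. x $ inv e k) + qE8 (\<lambda>k. x $ inv e (k + 8))
     + 2 * (x $ inv e 16 * x $ inv e 17 + x $ inv e 18 * x $ inv e 19 + x $ inv e 20 * x $ inv e 21)"
proof -
  have "bf Q x x = (\<Sum>i\<in>UNIV. \<Sum>j\<in>UNIV. x $ i * of_int (K3gram (e i) (e j)) * x $ j)"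
    unfolding bf_def inner_vec_def matrix_vector_mult_def
    by (simp add: gram sum_distrib_left mult.assoc)
  also have "\<dots> = (\<Sum>k\<in>{0..<22}. \<Sum>l\<in>{0..<22}. x $ inv e k * of_int (K3gram k l) * x $ inv e l)"
    unfolding sum_reindex by (intro sum.cong refl) (simp add: e_inv_e)
  finally show ?thesis unfolding K3gram_quadratic_form .
qed

sublocale symmetric_form Q
proof
  fix x y :: "real^'n"
  have "transpose Q = Q"
    unfolding transpose_def by (simp add: vec_eq_iff gram K3gram_commute)
  then have "x v* Q = Q *v x" using vector_transpose_matrix[of x Q] by simp
  have "bf Q x y = (x v* Q) \<bullet> y" by (simp add: bf_def dot_lmul_matrix)
  also have "\<dots> = bf Q y x" unfolding \<open>x v* Q = Q *v x\<close> bf_def by (rule inner_commute)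
  finally show "bf Q x y = bf Q y x" .
qed

text \<open>\<open>hyp_vec k\<close> is the positive vector \<open>u + u\<^sup>*\<close> of the hyperbolic plane with basis
  indices \<open>k, k + 1\<close>.\<close>
definition hyp_vec :: "nat \<Rightarrow> real^'n" where
  "hyp_vec k0 = (\<chi> i. if e i = k0 \<or> e i = k0 + 1 then 1 else 0)"

lemma hyp_vec_coord: "k < 22 \<Longrightarrow> hyp_vec k0 $ inv e k = (if k = k0 \<or> k = k0 + 1 then 1 else 0)"
  unfolding hyp_vec_def by (simp add: e_inv_e)

lemma inner_hyp_vec:
  "x \<bullet> hyp_vec 16 = x $ inv e 16 + x $ inv e 17"
  "x \<bullet> hyp_vec 18 = x $ inv e 18 + x $ inv e 19"
  "x \<bullet> hyp_vec 20 = x $ inv e 20 + x $ inv e 21"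
  unfolding inner_coords atLeastLessThan_upt sum_set_upt_conv_sum_list_nat upt_0_22
  by (simp_all add: hyp_vec_coord)

lemma hyp_vecs_independent: "independent {hyp_vec 16, hyp_vec 18, hyp_vec 20}"
  and card_hyp_vecs: "card {hyp_vec 16, hyp_vec 18, hyp_vec 20} = 3"
proof -
  have "hyp_vec 16 $ inv e 16 = 1" "hyp_vec 18 $ inv e 18 = 1" "hyp_vec 20 $ inv e 20 = 1"
    "hyp_vec 18 $ inv e 16 = 0" "hyp_vec 20 $ inv e 16 = 0" "hyp_vec 20 $ inv e 18 = 0"
    by (simp_all add: hyp_vec_coord)
  then have distinct: "hyp_vec 16 \<noteq> hyp_vec 18" "hyp_vec 16 \<noteq> hyp_vec 20" "hyp_vec 18 \<noteq> hyp_vec 20"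
    and nonzero: "0 \<notin> {hyp_vec 16, hyp_vec 18, hyp_vec 20}"
    by auto
  have "pairwise orthogonal {hyp_vec 16, hyp_vec 18, hyp_vec 20}"
    unfolding pairwise_def orthogonal_def by (auto simp: inner_hyp_vec hyp_vec_coord)
  then show "independent {hyp_vec 16, hyp_vec 18, hyp_vec 20}"
    using nonzero by (rule pairwise_orthogonal_independent)
  show "card {hyp_vec 16, hyp_vec 18, hyp_vec 20} = 3"
    using distinct by simp
qed

definition pos_space :: "(real^'n) set" where
  "pos_space = {x. (\<forall>k<16. x $ inv e k = 0) \<and> x $ inv e 16 = x $ inv e 17
     \<and> x $ inv e 18 = x $ inv e 19 \<and> x $ inv e 20 = x $ inv e 21}"

definition neg_space :: "(real^'n) set" where
  "neg_space = {hyp_vec 16, hyp_vec 18, hyp_vec 20}\<^sup>\<bottom>"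

lemma coords_lt_22:
  "(\<forall>k<22. P k) \<longleftrightarrow> (\<forall>k<16. P k) \<and> P 16 \<and> P 17 \<and> P 18 \<and> P 19 \<and> P 20 \<and> P (21::nat)"
proof -
  have "k < 22 \<longleftrightarrow> k < 16 \<or> k = 16 \<or> k = 17 \<or> k = 18 \<or> k = 19 \<or> k = 20 \<or> k = 21"
    for k :: nat by auto
  then show ?thesis by auto
qed

lemma dim_pos_space: "dim pos_space \<ge> 3"
proof -
  have "{hyp_vec 16, hyp_vec 18, hyp_vec 20} \<subseteq> pos_space"
    unfolding pos_space_def by (simp add: hyp_vec_coord)
  from independent_card_le_dim[OF this hyp_vecs_independent] show ?thesis
    using card_hyp_vecs by simp
qed

lemma posdef_pos_space: "posdef_sub Q pos_space"
  unfolding posdef_sub_def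
proof (intro conjI ballI impI)
  show "subspace pos_space"
    unfolding subspace_def pos_space_def by simp
  fix x assume x: "x \<in> pos_space" "x \<noteq> 0"
  have low: "\<forall>k<16. x $ inv e k = 0" and
    eqs: "x $ inv e 17 = x $ inv e 16" "x $ inv e 19 = x $ inv e 18" "x $ inv e 21 = x $ inv e 20"
    using x(1) unfolding pos_space_def by auto
  then have "x $ inv e 16 \<noteq> 0 \<or> x $ inv e 18 \<noteq> 0 \<or> x $ inv e 20 \<noteq> 0"
    using x(2) unfolding vec_eq_0_iff_coords coords_lt_22 by auto
  moreover have "bf Q x x = 2 * ((x $ inv e 16)\<^sup>2 + (x $ inv e 18)\<^sup>2 + (x $ inv e 20)\<^sup>2)"
    using low unfolding bf_diag_coords eqs by (simp add: qE8_def power2_eq_square)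
  ultimately show "bf Q x x > 0"
    by (auto simp: add_pos_nonneg add_nonneg_pos)
qed

lemma dim_neg_space: "dim neg_space = 19"
  using dim_orthogonal_comp[of "{hyp_vec 16, hyp_vec 18, hyp_vec 20}"]
    dim_eq_card_independent[OF hyp_vecs_independent] card_hyp_vecs CARD_eq_22
  unfolding neg_space_def by simp

lemma negdef_neg_space: "negdef_sub Q neg_space"
  unfolding negdef_sub_def
proof (intro conjI ballI impI)
  show "subspace neg_space"
    unfolding neg_space_def by (rule subspace_orthogonal_comp)
  fix y assume y: "y \<in> neg_space" "y \<noteq> 0"
  have high: "y $ inv e 17 = - y $ inv e 16" "y $ inv e 19 = - y $ inv e 18"
    "y $ inv e 21 = - y $ inv e 20"
    using y(1) unfolding neg_space_def orthogonal_comp_def orthogonal_def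
    by (auto simp: inner_commute[of _ y] inner_hyp_vec eq_neg_iff_add_eq_0)
  then have bf: "bf Q y y = qE8 (\<lambda>k. y $ inv e k) + qE8 (\<lambda>k. y $ inv e (k + 8))
      - 2 * ((y $ inv e 16)\<^sup>2 + (y $ inv e 18)\<^sup>2 + (y $ inv e 20)\<^sup>2)"
    unfolding bf_diag_coords by (simp add: power2_eq_square)
  show "bf Q y y < 0"
  proof (rule ccontr)
    have vanish: "a = 0 \<and> b = 0 \<and> c = 0 \<and> d = 0 \<and> f = 0"
      if "a \<le> 0" "b \<le> 0" "0 \<le> c" "0 \<le> d" "0 \<le> f" "0 \<le> a + b - 2 * (c + d + f)"
      for a b c d f :: real
      using that by auto
    assume "\<not> bf Q y y < 0"
    then have "0 \<le> qE8 (\<lambda>k. y $ inv e k) + qE8 (\<lambda>k. y $ inv e (k + 8))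
      - 2 * ((y $ inv e 16)\<^sup>2 + (y $ inv e 18)\<^sup>2 + (y $ inv e 20)\<^sup>2)"
      unfolding bf by simp
    from vanish[OF qE8_nonpos qE8_nonpos zero_le_power2 zero_le_power2 zero_le_power2 this]
    have low: "\<forall>i<8. y $ inv e i = 0" "\<forall>i<8. y $ inv e (i + 8) = 0"
      and "y $ inv e 16 = 0" "y $ inv e 18 = 0" "y $ inv e 20 = 0"
      unfolding qE8_eq_0_iff by simp_all
    moreover have "y $ inv e k = 0" if "k < 16" for k
    proof (cases "k < 8")
      case True
      then show ?thesis using low(1) by blast
    next
      case False
      then show ?thesis using low(2)[rule_format, of "k - 8"] that by simp
    qed
    ultimately have "y = 0"
      unfolding vec_eq_0_iff_coords coords_lt_22 using high by simp
    then show False using y(2) by blast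
  qed
qed

lemma posdef_dim_le_3: "posdef_sub Q S \<Longrightarrow> dim S \<le> 3"
  using posdef_negdef_dim_le[of Q S neg_space UNIV] negdef_neg_space dim_neg_space CARD_eq_22
  by simp

lemma negdef_dim_le_19: "negdef_sub Q T \<Longrightarrow> dim T \<le> 19"
  using posdef_negdef_dim_le[of Q pos_space T UNIV] posdef_pos_space dim_pos_space CARD_eq_22
  by simp

lemma form_radical_UNIV: "form_radical Q UNIV = {0}"
  using form_radical_eq_0[OF subspace_UNIV posdef_pos_space _ negdef_neg_space]
    dim_pos_space dim_neg_space CARD_eq_22 by simp

lemma inj_Q: "inj ((*v) Q)"
proof (rule linear_inj_on_iff_eq_0[THEN iffD2, OF matrix_vector_mul_linear subspace_UNIV], clarify)
  fix x assume "Q *v x = 0"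
  then have "bf Q x y = 0" for y using bf_commute[of x y] by (simp add: bf_def)
  then show "x = 0" using form_radical_UNIV unfolding form_radical_def by blast
qed

end

section \<open>The splitting of the K3 lattice along \<open>U'\<close>\<close>

locale k3_splitting = k3_form e Q + hyperbolic_pair Q v vs
  for e :: "'n::finite \<Rightarrow> nat" and Q v vs +
  fixes N :: "(real^'n) set" and r :: nat
  assumes N_sublattice: "sublattice N" and N_signature: "lattice_signature Q N 1 r"
    and U_orth_N: "v \<in> orth_latt Q N" "vs \<in> orth_latt Q N"
begin

text \<open>\<open>perp_lattice\<close> and \<open>dual_lattice\<close> are the lattices \<open>\<Gamma>'\<close> and \<open>N\<^sup>\<vee>\<close>.\<close>
abbreviation perp_lattice :: "(real^'n) set" where
  "perp_lattice \<equiv> {x \<in> latt. bf Q x v = 0 \<and> bf Q x vs = 0}"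

abbreviation dual_lattice :: "(real^'n) set" where
  "dual_lattice \<equiv> orth_latt Q N \<inter> perp_lattice"

lemma span_N_signature: "has_signature Q (span N) 1 r"
  using N_signature unfolding lattice_signature_def .

lemma N_v_vs_latt: "N \<union> {v, vs} \<subseteq> latt"
  using N_sublattice U_orth_N unfolding sublattice_def orth_latt_def by auto

lemma span_N_perp: "span N \<subseteq> orth_real Q {v, vs}"
proof (rule span_subset_orth_real)
  show "N \<subseteq> orth_real Q {v, vs}"
    using U_orth_N unfolding orth_latt_def orth_real_def
    by (auto simp: bf_commute[of _ v] bf_commute[of _ vs])
qed

lemma dual_lattice_eq: "dual_lattice = latt \<inter> orth_real Q (N \<union> {v, vs})"
  unfolding orth_latt_def orth_real_def by auto

lemma span_dual_lattice: "span dual_lattice = orth_real Q (N \<union> {v, vs})"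
  unfolding dual_lattice_eq using Q_integral N_v_vs_latt by (rule span_latt_orth_real)

lemma span_perp_lattice: "span perp_lattice = orth_real Q {v, vs}"
proof -
  have "perp_lattice = latt \<inter> orth_real Q {v, vs}" unfolding orth_real_def by auto
  then show ?thesis using span_latt_orth_real[OF Q_integral] N_v_vs_latt by simp
qed

lemma span_dual_perp: "span dual_lattice \<subseteq> orth_real Q {v, vs}"
  unfolding span_dual_lattice by (rule orth_real_mono) blast

lemma span_dual_orth_N: "span dual_lattice \<subseteq> orth_real Q (span N)"
  unfolding span_dual_lattice orth_real_span by (rule orth_real_mono) blast

lemma dim_N_v_vs: "dim (N \<union> {v, vs}) = r + 3"
proof -
  have "span N \<inter> span {v, vs} \<subseteq> {0}"
  proof
    fix x assume x: "x \<in> span N \<inter> span {v, vs}"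
    then obtain s t where st: "x = s *\<^sub>R v + t *\<^sub>R vs" by (auto simp: span_pair_iff)
    have "bf Q x v = 0" "bf Q x vs = 0" using x span_N_perp unfolding orth_real_def by auto
    then show "x \<in> {0}" unfolding st by (simp add: bf_simps v_isotropic vs_isotropic v_vs vs_v)
  qed
  then have "dim (span N \<inter> span {v, vs}) = 0" by simp
  moreover have "dim (span N) = r + 1" using span_N_signature unfolding has_signature_def by simp
  ultimately show ?thesis
    using dim_sums_Int[OF subspace_span subspace_span, of N "{v, vs}"] dim_span_pair[of v vs, OF v_vs_independent]
    unfolding span_Un[symmetric] dim_span by linarith
qed

lemma dim_dual: "dim (span dual_lattice) + r = 19"
  using dim_orth_real[OF inj_Q, of "N \<union> {v, vs}"] dim_N_v_vs CARD_eq_22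
  unfolding span_dual_lattice by simp

lemma span_N_Int_dual: "span N \<inter> span dual_lattice = {0}"
proof -
  have "span N \<inter> span dual_lattice \<subseteq> form_radical Q (span N)"
    using span_dual_orth_N bf_commute unfolding form_radical_def orth_real_def by auto
  then show ?thesis
    using has_signature_radical[OF span_N_signature] by (auto simp: span_zero)
qed

lemma perp_eq_sum: "orth_real Q {v, vs} = {x + y |x y. x \<in> span N \<and> y \<in> span dual_lattice}"
proof (rule sym, rule subspace_dim_equal)
  show "subspace {x + y |x y. x \<in> span N \<and> y \<in> span dual_lattice}"
    by (rule subspace_sums[OF subspace_span subspace_span])
  show "subspace (orth_real Q {v, vs})" by (rule subspace_orth_real)
  show "{x + y |x y. x \<in> span N \<and> y \<in> span dual_lattice} \<subseteq> orth_real Q {v, vs}"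
    using span_N_perp span_dual_perp subspace_add[OF subspace_orth_real] by blast
  have "dim (orth_real Q {v, vs}) = 20"
    using dim_orth_real[OF inj_Q, of "{v, vs}"] dim_span_pair[of v vs, OF v_vs_independent]
      CARD_eq_22 by simp
  moreover have "dim (span N) = r + 1" using span_N_signature unfolding has_signature_def by simp
  moreover have "dim (span N \<inter> span dual_lattice) = 0" using span_N_Int_dual by simp
  ultimately show "dim (orth_real Q {v, vs}) \<le> dim {x + y |x y. x \<in> span N \<and> y \<in> span dual_lattice}"
    using dim_sums_Int[OF subspace_span subspace_span, of N dual_lattice] dim_dual by linarith
qed

lemma dual_radical: "form_radical Q (span dual_lattice) = {0}"
proof -
  have "bf Q x z = 0" if x: "x \<in> form_radical Q (span dual_lattice)" for x z
  proof -
    obtain a b where ab: "perp_proj z = a + b" "a \<in> span N" "b \<in> span dual_lattice"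
      using perp_proj_orthogonal[of z] unfolding perp_eq_sum by blast
    have "x \<in> span dual_lattice" "bf Q x b = 0" using x ab(3) unfolding form_radical_def by auto
    moreover from this(1) have "bf Q x a = 0" "bf Q x v = 0" "bf Q x vs = 0"
      using ab(2) span_dual_orth_N span_dual_perp unfolding orth_real_def by auto
    ultimately show "bf Q x z = 0"
      by (subst perp_proj_decomposition[of z]) (simp add: ab(1) bf_simps)
  qed
  then have "form_radical Q (span dual_lattice) \<subseteq> form_radical Q UNIV"
    unfolding form_radical_def by blast
  then show ?thesis using form_radical_UNIV subspace_0[OF subspace_span] unfolding form_radical_def
    by auto
qed

lemma dual_lattice_orth_latt: "dual_lattice = orth_latt Q (N \<union> {v, vs})"
  unfolding dual_lattice_eq orth_latt_def orth_real_def by auto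

lemma span_N_orth_dual: "span N \<subseteq> orth_real Q (span dual_lattice)"
  by (rule orth_real_commute[OF span_dual_orth_N])

lemma bf_perp_span_v_vs: "x \<in> orth_real Q {v, vs} \<Longrightarrow> y \<in> span {v, vs} \<Longrightarrow> bf Q x y = 0"
  unfolding orth_real_def span_pair_iff by (auto simp: bf_simps)

lemma sum_subset_perp:
  assumes "S1 \<subseteq> orth_real Q {v, vs}" "S2 \<subseteq> orth_real Q {v, vs}"
  shows "{a + b |a b. a \<in> S1 \<and> b \<in> S2} \<subseteq> orth_real Q {v, vs}"
  using assms subspace_add[OF subspace_orth_real] by blast

text \<open>The positive directions of \<open>span N\<^sup>\<vee>\<close>, of \<open>span N\<close> and \<open>v + v\<^sup>*\<close> are mutually orthogonal,
  and \<open>\<Gamma>\<close> has only three of them.\<close>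
lemma dual_posdef_dim_le:
  assumes "posdef_sub Q S" "S \<subseteq> span dual_lattice"
  shows "dim S \<le> 1"
proof -
  obtain SV where SV: "posdef_sub Q SV" "SV \<subseteq> span N" "dim SV = 1"
    using span_N_signature unfolding has_signature_def by blast
  have "bf Q x y = 0" if "x \<in> S" "y \<in> SV" for x y
    using that assms(2) SV(2) span_dual_orth_N unfolding orth_real_def by blast
  note S_SV = posdef_orthogonal_sum[OF assms(1) SV(1) this]
  have "bf Q (v + vs) (v + vs) > 0" by (simp add: bf_simps v_isotropic vs_isotropic v_vs vs_v)
  note line = posdef_span_singleton[OF this]
  have "span {v + vs} \<subseteq> span {v, vs}"
    by (intro span_minimal subspace_span) (simp add: span_add span_base)
  moreover have "{a + b |a b. a \<in> S \<and> b \<in> SV} \<subseteq> orth_real Q {v, vs}"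
    using assms(2) SV(2) span_dual_perp span_N_perp by (intro sum_subset_perp) auto
  ultimately have "bf Q x y = 0" if "x \<in> {a + b |a b. a \<in> S \<and> b \<in> SV}" "y \<in> span {v + vs}" for x y
    using that bf_perp_span_v_vs by blast
  from posdef_orthogonal_sum[OF S_SV(1) line(1) this] show ?thesis
    using posdef_dim_le_3 S_SV(2) SV(3) line(2) by fastforce
qed

lemma dual_negdef_dim_le:
  assumes "negdef_sub Q T" "T \<subseteq> span dual_lattice"
  shows "dim T + r \<le> 18"
proof -
  obtain TV where TV: "negdef_sub Q TV" "TV \<subseteq> span N" "dim TV = r"
    using span_N_signature unfolding has_signature_def by blast
  have "bf Q x y = 0" if "x \<in> T" "y \<in> TV" for x y
    using that assms(2) TV(2) span_dual_orth_N unfolding orth_real_def by blast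
  note T_TV = negdef_orthogonal_sum[OF assms(1) TV(1) this]
  have "bf Q (v - vs) (v - vs) < 0" by (simp add: bf_simps v_isotropic vs_isotropic v_vs vs_v)
  note line = negdef_span_singleton[OF this]
  have "span {v - vs} \<subseteq> span {v, vs}"
    by (intro span_minimal subspace_span) (simp add: span_diff span_base)
  moreover have "{a + b |a b. a \<in> T \<and> b \<in> TV} \<subseteq> orth_real Q {v, vs}"
    using assms(2) TV(2) span_dual_perp span_N_perp by (intro sum_subset_perp) auto
  ultimately have "bf Q x y = 0" if "x \<in> {a + b |a b. a \<in> T \<and> b \<in> TV}" "y \<in> span {v - vs}" for x y
    using that bf_perp_span_v_vs by blast
  from negdef_orthogonal_sum[OF T_TV(1) line(1) this] show ?thesis
    using negdef_dim_le_19 T_TV(2) TV(3) line(2) by fastforce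
qed

lemma dual_signature: "has_signature Q (span dual_lattice) 1 (18 - r)"
proof -
  obtain S T where ST: "posdef_sub Q S" "S \<subseteq> span dual_lattice" "negdef_sub Q T" "T \<subseteq> span dual_lattice"
    "dim (span dual_lattice) \<le> dim S + dim T + dim (form_radical Q (span dual_lattice))"
    using pos_neg_radical_cover[OF subspace_span] by blast
  have "dim S = 1" "dim T = 18 - r" "dim (span dual_lattice) = 1 + (18 - r)"
    using ST(5) dual_radical dual_posdef_dim_le[OF ST(1,2)] dual_negdef_dim_le[OF ST(3,4)] dim_dual
    by simp_all
  then show ?thesis
    unfolding has_signature_def using ST(1-4) by auto
qed

lemma perp_proj_orth_N: "perp_proj ` orth_real Q (span N) \<subseteq> span dual_lattice"
  using perp_eq_sum span_N_perp has_signature_radical[OF span_N_signature] span_dual_orth_N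
  by (intro perp_proj_orth_real_subset) auto

lemma perp_proj_orth_dual: "perp_proj ` orth_real Q (span dual_lattice) \<subseteq> span N"
proof (rule perp_proj_orth_real_subset[OF _ span_dual_perp dual_radical span_N_orth_dual])
  show "orth_real Q {v, vs} \<subseteq> {a + b |a b. a \<in> span dual_lattice \<and> b \<in> span N}"
  proof
    fix x assume "x \<in> orth_real Q {v, vs}"
    then obtain a b where "x = b + a" "a \<in> span N" "b \<in> span dual_lattice"
      unfolding perp_eq_sum by (auto simp: add.commute)
    then show "x \<in> {a + b |a b. a \<in> span dual_lattice \<and> b \<in> span N}" by blast
  qed
qed

end

theorem mainTheorem15:
  fixes Q :: "real^'n^'n" and e :: "'n \<Rightarrow> nat"
    and N :: "(real^'n) set" and r :: nat and v vs :: "real^'n"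
  assumes K3: "bij_betw e UNIV {0..<22}" "\<And>i j. Q $ i $ j = of_int (K3gram (e i) (e j))"
    and N: "sublattice N" "lattice_signature Q N 1 r"
    and U': "v \<in> orth_latt Q N" "vs \<in> orth_latt Q N"
            "bf Q v v = 0" "bf Q vs vs = 0" "bf Q v vs = 1"
  defines "\<Gamma>' \<equiv> {x \<in> latt. bf Q x v = 0 \<and> bf Q x vs = 0}"
  defines "Nv \<equiv> orth_latt Q N \<inter> \<Gamma>'"
  defines "V \<equiv> span N"
  defines "Vv \<equiv> span Nv"
  shows "sublattice Nv \<and> lattice_signature Q Nv 1 (18 - r)
     \<and> orth_latt Q N = {y + of_int a *\<^sub>R v + of_int b *\<^sub>R vs | y a b. y \<in> Nv}
     \<and> span \<Gamma>' = {x + y | x y. x \<in> V \<and> y \<in> Vv} \<and> V \<inter> Vv = {0}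
     \<and> xi_tilde Q v vs ` (gamma_map Q ` Tbar Q V) = gamma_map Q ` Tbar Q Vv"
proof -
  interpret k3_form e Q using K3 by unfold_locales
  interpret k3_splitting e Q v vs N r
    using U' N by unfold_locales
  show ?thesis
    unfolding \<Gamma>'_def Nv_def V_def Vv_def
  proof (intro conjI)
    show "sublattice dual_lattice"
      unfolding dual_lattice_orth_latt by (rule sublattice_orth_latt)
    show "lattice_signature Q dual_lattice 1 (18 - r)"
      unfolding lattice_signature_def by (rule dual_signature)
    show "orth_latt Q N = {y + of_int a *\<^sub>R v + of_int b *\<^sub>R vs | y a b. y \<in> dual_lattice}"
      by (rule orth_latt_decomposition[OF Q_integral U'(1,2)])
    show "span perp_lattice = {x + y | x y. x \<in> span N \<and> y \<in> span dual_lattice}"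
      unfolding span_perp_lattice by (rule perp_eq_sum)
    show "span N \<inter> span dual_lattice = {0}"
      by (rule span_N_Int_dual)
    show "xi_tilde Q v vs ` gamma_map Q ` Tbar Q (span N) = gamma_map Q ` Tbar Q (span dual_lattice)"
      by (rule mirror_image_eq[OF span_N_signature span_N_perp dual_signature span_dual_perp
            span_N_orth_dual perp_proj_orth_N perp_proj_orth_dual])
  qed
qed

end
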